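(* Let $n\ge2$, let $\tau_1,\dots,\tau_{n!}$ be the enumeration $S_n$ of simple $n$-braids defined below, and let $M_n$ be the $n!\times n!$ matrix with $(M_n)_{k,\ell}=1$ if $(\tau_k,\tau_\ell)$ is normal and $0$ otherwise. Then: (i) the first column and the last row of $M_n$ contain only $1$'s; the first row, except its first entry, and the last column, except its last entry, contain only $0$'s; (ii) the first $(n-1)!$ columns of $M_n$ consist of $n$ stacked copies of $M_{n-1}$; (iii) if $D_R(\tau_k)=D_R(\tau_{k'})$, then the $k$-th and $k'$-th rows of $M_n$ coincide; if $D_L(\tau_\ell)=D_L(\tau_{\ell'})$, then the $\ell$-th and $\ell'$-th columns of $M_n$ coincide.
   Context: $B_n^+$ is the positive braid monoid with generators $\sigma_1,\dots,\sigma_{n-1}$ and relations $\sigma_i\sigma_j=\sigma_j\sigma_i$ ($|i-j|\ge2$), $\sigma_i\sigma_j\sigma_i=\sigma_j\sigma_i\sigma_j$ ($|i-j|=1$). $\Delta_1=1$, $\Delta_m=\sigma_1\cdots\sigma_{m-1}\Delta_{m-1}$. Simple $m$-braids are the left (equivalently right) divisors of $\Delta_m$ in $B_m^+$. For simple $x$, $D_L(x)$ (resp. $D_R(x)$) is the set of $i$ with $\sigma_i$ a left (resp. right) divisor of $x$. A pair $(x,y)$ of simple $m$-braids is normal if $x=\gcd(\Delta_m,xy)$ (greatest common left divisor); equivalently $D_R(x)\supseteq D_L(y)$. With $\sigma_{i,m}=\sigma_i\sigma_{i+1}\cdots\sigma_{m-1}$ ($\sigma_{m,m}=1$), the list $S_m$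 of simple $m$-braids is defined by $S_1=(1)$ and $S_m=S_{m-1}{}^\frown\sigma_{m-1,m}S_{m-1}{}^\frown\cdots{}^\frown\sigma_{1,m}S_{m-1}$, where ${}^\frown$ is list concatenation and $xS$ is the list obtained by left-multiplying every entry of $S$ by $x$. Each $S_{m-1}$ is an initial segment of $S_m$; $\tau_k$ denotes the $k$-th entry, and $M_{n-1}$ is defined like $M_n$ from $S_{n-1}$ with normality in $B_{n-1}^+$. *)

theory Defs
  imports Main
begin

(* Positive braid words: the generator sigma_i is represented by the natural number i.
   A word over {1..<m} represents an element of B_m^+. *)

inductive braid_step :: "nat list \<Rightarrow> nat list \<Rightarrow> bool" where
  comm: "i + 2 \<le> j \<or> j + 2 \<le> i \<Longrightarrow> braid_step (u @ [i, j] @ v) (u @ [j, i] @ v)"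
| braid: "j = Suc i \<or> i = Suc j \<Longrightarrow> braid_step (u @ [i, j, i] @ v) (u @ [j, i, j] @ v)"

(* equality in the positive braid monoid (the step relation is symmetric) *)
definition braid_eq :: "nat list \<Rightarrow> nat list \<Rightarrow> bool" where
  "braid_eq = braid_step\<^sup>*\<^sup>*"

definition words :: "nat \<Rightarrow> nat list set" where
  "words m = {w. set w \<subseteq> {1..<m}}"

definition ldiv :: "nat \<Rightarrow> nat list \<Rightarrow> nat list \<Rightarrow> bool" where
  "ldiv m x y \<longleftrightarrow> (\<exists>z \<in> words m. braid_eq (x @ z) y)"

definition rdiv :: "nat \<Rightarrow> nat list \<Rightarrow> nat list \<Rightarrow> bool" where
  "rdiv m x y \<longleftrightarrow> (\<exists>z \<in> words m. braid_eq (z @ x) y)"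

fun Delta :: "nat \<Rightarrow> nat list" where
  "Delta 0 = []"
| "Delta (Suc m) = [1..<Suc m] @ Delta m"

definition simple :: "nat \<Rightarrow> nat list \<Rightarrow> bool" where
  "simple m x \<longleftrightarrow> x \<in> words m \<and> ldiv m x (Delta m)"

definition D_L :: "nat \<Rightarrow> nat list \<Rightarrow> nat set" where
  "D_L m x = {i \<in> {1..<m}. ldiv m [i] x}"

definition D_R :: "nat \<Rightarrow> nat list \<Rightarrow> nat set" where
  "D_R m x = {i \<in> {1..<m}. rdiv m [i] x}"

(* (x,y) normal in B_m^+ : x = gcd(Delta_m, x y), i.e. x is a greatest common left divisor *)
definition normal :: "nat \<Rightarrow> nat list \<Rightarrow> nat list \<Rightarrow> bool" where
  "normal m x y \<longleftrightarrow>
     ldiv m x (Delta m) \<and> ldiv m x (x @ y) \<and>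
     (\<forall>w \<in> words m. ldiv m w (Delta m) \<longrightarrow> ldiv m w (x @ y) \<longrightarrow> ldiv m w x)"

definition sigma_seg :: "nat \<Rightarrow> nat \<Rightarrow> nat list" where
  "sigma_seg i m = [i..<m]"

(* S_1 = (1), S_m = S_(m-1) ^ sigma_(m-1,m) S_(m-1) ^ ... ^ sigma_(1,m) S_(m-1).
   The first block corresponds to i = m (sigma_(m,m) = 1). simples 0 is a junk value. *)
fun simples :: "nat \<Rightarrow> nat list list" where
  "simples 0 = [[]]"
| "simples (Suc m) =
     concat (map (\<lambda>i. map (\<lambda>x. sigma_seg i (Suc m) @ x) (simples m)) (rev [1..<Suc (Suc m)]))"

definition tau :: "nat \<Rightarrow> nat \<Rightarrow> nat list" where
  "tau n k = simples n ! (k - 1)"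

definition M :: "nat \<Rightarrow> nat \<Rightarrow> nat \<Rightarrow> nat" where
  "M n k l = (if normal n (tau n k) (tau n l) then 1 else 0)"

end

theory Submission
  imports Defs
begin

(* Garside's argument gives left cancellation and least common multiples in the positive braid
   monoid: if a X = b Y for words with first letters a and b, then X and Y factor through the
   complements of sigma_a and sigma_b in their lcm.  This is proved by induction on the length,
   following the chain of elementary relations from a X to b Y.  Simple braids are exactly the
   reduced words, in which any two strands cross at most once (in Delta_m every pair crosses
   once).  Together with the exchange property of reduced words this gives the criterion
   "(x, y) is normal iff D_L(y) is contained in D_R(x)".  Every claim about M_n follows from it:
   tau_1 = 1 and tau_{n!} = Delta_n give the extreme rows and columns, rows depend only on D_R
   and columns only on D_L, and sigma_{i,n} x has the same right descents below n as x, which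
   produces the stacked copies of M_{n-1}. *)

section \<open>Braid words\<close>

abbreviation braid_equiv :: "nat list \<Rightarrow> nat list \<Rightarrow> bool" (infix "\<approx>" 50) where
  "x \<approx> y \<equiv> braid_eq x y"

lemma braid_step_sym: "braid_step u v \<Longrightarrow> braid_step v u"
proof (induction rule: braid_step.induct)
  case (comm i j u v) then show ?case using braid_step.comm[of j i u v] by auto
next
  case (braid j i u v) then show ?case using braid_step.braid[of i j u v] by auto
qed

lemma braid_step_append: "braid_step u v \<Longrightarrow> braid_step (w @ u @ w') (w @ v @ w')"
proof (induction rule: braid_step.induct)
  case (comm i j u v) then show ?case using braid_step.comm[of i j "w @ u" "v @ w'"] by auto
next
  case (braid j i u v) then show ?case using braid_step.braid[of j i "w @ u" "v @ w'"] by auto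
qed

lemma braid_step_rev: "braid_step u v \<Longrightarrow> braid_step (rev u) (rev v)"
proof (induction rule: braid_step.induct)
  case (comm i j u v) then show ?case using braid_step.comm[of j i "rev v" "rev u"] by auto
next
  case (braid j i u v) then show ?case using braid_step.braid[of j i "rev v" "rev u"] by auto
qed

lemma braid_step_length: "braid_step u v \<Longrightarrow> length u = length v"
  by (induction rule: braid_step.induct) auto

lemma braid_step_set: "braid_step u v \<Longrightarrow> set u = set v"
  by (induction rule: braid_step.induct) auto

lemma braid_eq_refl [simp]: "x \<approx> x"
  unfolding braid_eq_def by simp

lemma braid_eq_trans [trans]: "x \<approx> y \<Longrightarrow> y \<approx> z \<Longrightarrow> x \<approx> z"
  unfolding braid_eq_def by simp

lemma braid_eq_sym: "x \<approx> y \<Longrightarrow> y \<approx> x"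
  unfolding braid_eq_def
  by (induction rule: rtranclp_induct) (auto intro: converse_rtranclp_into_rtranclp braid_step_sym)

lemma braid_eq_append_both: "x \<approx> y \<Longrightarrow> (w @ x @ w') \<approx> (w @ y @ w')"
  unfolding braid_eq_def
  by (induction rule: rtranclp_induct) (auto intro: rtranclp.rtrancl_into_rtrancl braid_step_append)

lemma braid_eq_append_left: "x \<approx> y \<Longrightarrow> (w @ x) \<approx> (w @ y)"
  using braid_eq_append_both[of x y w "[]"] by simp

lemma braid_eq_append_right: "x \<approx> y \<Longrightarrow> (x @ w) \<approx> (y @ w)"
  using braid_eq_append_both[of x y "[]" w] by simp

lemma braid_eq_Cons: "x \<approx> y \<Longrightarrow> (a # x) \<approx> (a # y)"
  using braid_eq_append_left[of x y "[a]"] by simp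

lemma braid_eq_rev: "x \<approx> y \<Longrightarrow> rev x \<approx> rev y"
  unfolding braid_eq_def
  by (induction rule: rtranclp_induct) (auto intro: rtranclp.rtrancl_into_rtrancl braid_step_rev)

lemma braid_eq_length: "x \<approx> y \<Longrightarrow> length x = length y"
  unfolding braid_eq_def by (induction rule: rtranclp_induct) (auto dest: braid_step_length)

lemma braid_eq_set: "x \<approx> y \<Longrightarrow> set x = set y"
  unfolding braid_eq_def by (induction rule: rtranclp_induct) (auto dest: braid_step_set)

definition distant :: "nat \<Rightarrow> nat \<Rightarrow> bool" where
  "distant i j \<longleftrightarrow> i + 2 \<le> j \<or> j + 2 \<le> i"

definition adjacent :: "nat \<Rightarrow> nat \<Rightarrow> bool" where
  "adjacent i j \<longleftrightarrow> j = Suc i \<or> i = Suc j"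

lemma distant_sym: "distant i j = distant j i"
  unfolding distant_def by auto

lemma adjacent_sym: "adjacent i j = adjacent j i"
  unfolding adjacent_def by auto

lemma adjacent_if_not_distant: "i \<noteq> j \<Longrightarrow> \<not> distant i j \<Longrightarrow> adjacent i j"
  unfolding distant_def adjacent_def by auto

lemma not_distant_if_adjacent: "adjacent i j \<Longrightarrow> \<not> distant i j"
  unfolding distant_def adjacent_def by auto

lemma adjacent_neq: "adjacent i j \<Longrightarrow> i \<noteq> j"
  unfolding adjacent_def by auto

lemma distant_neq: "distant i j \<Longrightarrow> i \<noteq> j"
  unfolding distant_def by auto

lemma braid_eq_commute: "distant i j \<Longrightarrow> (u @ [i, j] @ v) \<approx> (u @ [j, i] @ v)"
  unfolding braid_eq_def distant_def by (rule r_into_rtranclp, rule braid_step.comm) auto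

lemma braid_eq_braid: "adjacent i j \<Longrightarrow> (u @ [i, j, i] @ v) \<approx> (u @ [j, i, j] @ v)"
  unfolding braid_eq_def adjacent_def by (rule r_into_rtranclp, rule braid_step.braid) auto

lemma braid_eq_commute_Cons: "distant i j \<Longrightarrow> (i # j # v) \<approx> (j # i # v)"
  using braid_eq_commute[of i j "[]" v] by simp

lemma braid_eq_braid_Cons: "adjacent i j \<Longrightarrow> (i # j # i # v) \<approx> (j # i # j # v)"
  using braid_eq_braid[of i j "[]" v] by simp

lemma braid_eq_commute_list: "\<forall>x \<in> set w. distant c x \<Longrightarrow> (c # w @ z) \<approx> (w @ c # z)"
proof (induction w)
  case Nil then show ?case by simp
next
  case (Cons x w)
  have "(c # x # w @ z) \<approx> (x # c # w @ z)"
    using braid_eq_commute_Cons[of c x "w @ z"] Cons.prems by simp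
  also have "\<dots> \<approx> (x # w @ c # z)"
    using Cons by (auto intro: braid_eq_Cons)
  finally show ?case by simp
qed

section \<open>Garside's lemma and left cancellation\<close>

text \<open>For \<open>a \<noteq> b\<close>, \<open>a # lcm_compl a b\<close> spells the least common multiple of \<open>\<sigma>\<^sub>a\<close> and \<open>\<sigma>\<^sub>b\<close>
  with respect to left divisibility: \<open>\<sigma>\<^sub>a\<sigma>\<^sub>b\<close> for distant and \<open>\<sigma>\<^sub>a\<sigma>\<^sub>b\<sigma>\<^sub>a\<close> for adjacent generators.\<close>

definition lcm_compl :: "nat \<Rightarrow> nat \<Rightarrow> nat list" where
  "lcm_compl a b = (if adjacent a b then [b, a] else [b])"

lemma lcm_compl_distant: "distant a b \<Longrightarrow> lcm_compl a b = [b]"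
  by (auto simp: lcm_compl_def dest: not_distant_if_adjacent)

lemma lcm_compl_adjacent: "adjacent a b \<Longrightarrow> lcm_compl a b = [b, a]"
  unfolding lcm_compl_def by simp

lemma lcm_compl_commute: "a \<noteq> b \<Longrightarrow> (a # lcm_compl a b) \<approx> (b # lcm_compl b a)"
  unfolding lcm_compl_def
  using braid_eq_commute_Cons[of a b "[]"] braid_eq_braid_Cons[of a b "[]"] adjacent_if_not_distant[of a b]
  by (auto simp: adjacent_sym)

definition lcm_factored :: "nat \<Rightarrow> nat list \<Rightarrow> nat \<Rightarrow> nat list \<Rightarrow> bool" where
  "lcm_factored a X b Y \<longleftrightarrow>
     (a = b \<longrightarrow> X \<approx> Y) \<and>
     (a \<noteq> b \<longrightarrow> (\<exists>Z. X \<approx> lcm_compl a b @ Z \<and> Y \<approx> lcm_compl b a @ Z))"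

lemma lcm_factored_braid_step:
  assumes "braid_step (c # U) (b # Y)"
  shows "lcm_factored c U b Y"
  using assms
proof (cases rule: braid_step.cases)
  case (comm i j u v)
  show ?thesis
  proof (cases u)
    case Nil
    with comm have "c = i" "U = j # v" "b = j" "Y = i # v" "distant i j"
      by (auto simp: distant_def)
    then show ?thesis
      unfolding lcm_factored_def
      by (auto simp: lcm_compl_distant distant_sym intro!: exI[of _ v] dest: distant_neq)
  next
    case (Cons x u')
    with comm have "c = b" "braid_step U Y" using braid_step.comm[of i j u' v] by auto
    then show ?thesis unfolding lcm_factored_def braid_eq_def by auto
  qed
next
  case (braid j i u v)
  show ?thesis
  proof (cases u)
    case Nil
    with braid have "c = i" "U = j # i # v" "b = j" "Y = i # j # v" "adjacent i j"
      by (auto simp: adjacent_def)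
    then show ?thesis
      unfolding lcm_factored_def
      by (auto simp: lcm_compl_adjacent adjacent_sym intro!: exI[of _ v] dest: adjacent_neq)
  next
    case (Cons x u')
    with braid have "c = b" "braid_step U Y" using braid_step.braid[of j i u' v] by auto
    then show ?thesis unfolding lcm_factored_def braid_eq_def by auto
  qed
qed

lemma lcm_factored_sym: "lcm_factored a X b Y \<Longrightarrow> lcm_factored b Y a X"
  unfolding lcm_factored_def by (auto intro: braid_eq_sym)

lemma lcm_factored_cong_left: "X \<approx> X' \<Longrightarrow> lcm_factored a X' b Y \<Longrightarrow> lcm_factored a X b Y"
  unfolding lcm_factored_def by (meson braid_eq_trans)

lemma lcm_factored_cong_right: "Y \<approx> Y' \<Longrightarrow> lcm_factored a X b Y' \<Longrightarrow> lcm_factored a X b Y"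
  using lcm_factored_cong_left lcm_factored_sym by blast

definition lcm_factored_below :: "nat \<Rightarrow> bool" where
  "lcm_factored_below N \<longleftrightarrow>
     (\<forall>a X b Y. length X < N \<longrightarrow> (a # X) \<approx> (b # Y) \<longrightarrow> lcm_factored a X b Y)"

context
  fixes N :: nat
  assumes below: "lcm_factored_below N"
begin

lemma lcm_factored_belowD: "length X < N \<Longrightarrow> (a # X) \<approx> (b # Y) \<Longrightarrow> lcm_factored a X b Y"
  using below unfolding lcm_factored_below_def by blast

lemma cancel_Cons_below: "length X < N \<Longrightarrow> (a # X) \<approx> (a # Y) \<Longrightarrow> X \<approx> Y"
  using lcm_factored_belowD unfolding lcm_factored_def by blast

lemma cancel_append_below: "length (w @ X) \<le> N \<Longrightarrow> (w @ X) \<approx> (w @ Y) \<Longrightarrow> X \<approx> Y"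
proof (induction w)
  case (Cons a w)
  then show ?case using cancel_Cons_below[of "w @ X" a "w @ Y"] by simp
qed simp

lemma distant_heads_below:
  assumes "length X < N" "distant a b" "(a # X) \<approx> (b # Y)"
  shows "\<exists>Z. X \<approx> b # Z \<and> Y \<approx> a # Z"
  using lcm_factored_belowD[OF assms(1,3)] distant_neq[OF assms(2)] assms(2)
  unfolding lcm_factored_def by (auto simp: lcm_compl_distant distant_sym)

lemma adjacent_heads_below:
  assumes "length X < N" "adjacent a b" "(a # X) \<approx> (b # Y)"
  shows "\<exists>Z. X \<approx> b # a # Z \<and> Y \<approx> a # b # Z"
  using lcm_factored_belowD[OF assms(1,3)] adjacent_neq[OF assms(2)] assms(2)
  unfolding lcm_factored_def by (auto simp: lcm_compl_adjacent adjacent_sym)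

text \<open>The composition step of Garside's argument, for pairwise distinct \<open>a\<close>, \<open>b\<close>, \<open>c\<close>: if a word
  factors through the lcms of \<open>\<sigma>\<^sub>c\<close> with \<open>\<sigma>\<^sub>a\<close> and with \<open>\<sigma>\<^sub>b\<close>, then the corresponding words
  starting with \<open>a\<close> and with \<open>b\<close> factor through the lcm of \<open>\<sigma>\<^sub>a\<close> and \<open>\<sigma>\<^sub>b\<close>.\<close>

lemma complements_compose_distant_distant:
  assumes ac: "distant a c" and bc: "distant b c" and ab: "a \<noteq> b"
    and e: "(lcm_compl c a @ Z1) \<approx> (lcm_compl c b @ Z2)" and l: "length (lcm_compl c a @ Z1) \<le> N"
  shows "\<exists>Z. (lcm_compl a c @ Z1) \<approx> lcm_compl a b @ Z \<and> (lcm_compl b c @ Z2) \<approx> lcm_compl b a @ Z"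
proof -
  have compl: "lcm_compl c a = [a]" "lcm_compl a c = [c]" "lcm_compl c b = [b]" "lcm_compl b c = [c]"
    using ac bc by (auto simp: lcm_compl_distant distant_sym)
  have "(a # Z1) \<approx> (b # Z2)" and "length Z1 < N"
    using e l compl by simp_all
  then obtain Z3 where Z3: "Z1 \<approx> lcm_compl a b @ Z3" "Z2 \<approx> lcm_compl b a @ Z3"
    using lcm_factored_belowD ab unfolding lcm_factored_def by blast
  have commute: "\<forall>x \<in> set (lcm_compl a b). distant c x" "\<forall>x \<in> set (lcm_compl b a). distant c x"
    using ac bc unfolding lcm_compl_def by (auto simp: distant_sym)
  have "(c # Z1) \<approx> lcm_compl a b @ c # Z3"
    using braid_eq_trans[OF braid_eq_Cons[OF Z3(1)] braid_eq_commute_list[OF commute(1)]] .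
  moreover have "(c # Z2) \<approx> lcm_compl b a @ c # Z3"
    using braid_eq_trans[OF braid_eq_Cons[OF Z3(2)] braid_eq_commute_list[OF commute(2)]] .
  ultimately show ?thesis using compl by auto
qed

lemma complements_compose_adjacent_distant_distant:
  assumes ac: "adjacent a c" and bc: "distant b c" and ab: "distant a b"
    and e: "(lcm_compl c a @ Z1) \<approx> (lcm_compl c b @ Z2)" and l: "length (lcm_compl c a @ Z1) \<le> N"
  shows "\<exists>Z. (lcm_compl a c @ Z1) \<approx> lcm_compl a b @ Z \<and> (lcm_compl b c @ Z2) \<approx> lcm_compl b a @ Z"
proof -
  have ca: "adjacent c a" and cb: "distant c b" and ba: "distant b a"
    using ac bc ab by (simp_all add: adjacent_sym distant_sym)
  have compl: "lcm_compl c a = [a, c]" "lcm_compl a c = [c, a]" "lcm_compl c b = [b]"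
    "lcm_compl b c = [c]" "lcm_compl a b = [b]" "lcm_compl b a = [a]"
    using ac bc ca cb ab ba by (simp_all add: lcm_compl_distant lcm_compl_adjacent)
  have e': "(a # c # Z1) \<approx> (b # Z2)" and lZ1: "length Z1 + 2 \<le> N"
    using e l compl by simp_all
  have "length (c # Z1) < N" using lZ1 by simp
  then obtain Z3 where Z3: "(c # Z1) \<approx> (b # Z3)" "Z2 \<approx> a # Z3"
    using distant_heads_below[OF _ ab e'] by blast
  obtain Z4 where Z4: "Z1 \<approx> b # Z4" "Z3 \<approx> c # Z4"
    using distant_heads_below[OF _ cb Z3(1)] lZ1 by auto
  have "(c # a # Z1) \<approx> (c # a # b # Z4)" by (intro braid_eq_Cons Z4(1))
  also have "\<dots> \<approx> b # c # a # Z4"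
    using braid_eq_sym[OF braid_eq_commute_list[of "[c, a]" b Z4]] ba bc by (simp add: distant_sym)
  finally have X: "(c # a # Z1) \<approx> b # c # a # Z4" .
  have "(c # Z2) \<approx> (c # a # Z3)" by (intro braid_eq_Cons Z3(2))
  also have "\<dots> \<approx> c # a # c # Z4" by (intro braid_eq_Cons Z4(2))
  also have "\<dots> \<approx> a # c # a # Z4" using braid_eq_braid_Cons[OF ca] .
  finally show ?thesis using X compl by auto
qed

lemma complements_compose_adjacent_distant_adjacent:
  assumes ac: "adjacent a c" and bc: "distant b c" and ab: "adjacent a b"
    and e: "(lcm_compl c a @ Z1) \<approx> (lcm_compl c b @ Z2)" and l: "length (lcm_compl c a @ Z1) \<le> N"
  shows "\<exists>Z. (lcm_compl a c @ Z1) \<approx> lcm_compl a b @ Z \<and> (lcm_compl b c @ Z2) \<approx> lcm_compl b a @ Z"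
proof -
  have ca: "adjacent c a" and cb: "distant c b" and ba: "adjacent b a"
    using ac bc ab by (simp_all add: adjacent_sym distant_sym)
  have compl: "lcm_compl c a = [a, c]" "lcm_compl a c = [c, a]" "lcm_compl c b = [b]"
    "lcm_compl b c = [c]" "lcm_compl a b = [b, a]" "lcm_compl b a = [a, b]"
    using ac bc ca cb ab ba by (simp_all add: lcm_compl_distant lcm_compl_adjacent)
  have e': "(a # c # Z1) \<approx> (b # Z2)" and lZ1: "length Z1 + 2 \<le> N"
    using e l compl by simp_all
  have "length (c # Z1) < N" using lZ1 by simp
  then obtain Z3 where Z3: "(c # Z1) \<approx> (b # a # Z3)" "Z2 \<approx> a # b # Z3"
    using adjacent_heads_below[OF _ ab e'] by blast
  obtain Z4 where Z4: "Z1 \<approx> b # Z4" "(a # Z3) \<approx> (c # Z4)"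
    using distant_heads_below[OF _ cb Z3(1)] lZ1 by auto
  have "length Z3 + 1 = length Z1" using braid_eq_length[OF Z3(1)] by simp
  then obtain Z5 where Z5: "Z3 \<approx> c # a # Z5" "Z4 \<approx> a # c # Z5"
    using adjacent_heads_below[OF _ ac Z4(2)] lZ1 by auto
  have "(c # a # Z1) \<approx> (c # a # b # Z4)" by (intro braid_eq_Cons Z4(1))
  also have "\<dots> \<approx> c # a # b # a # c # Z5" by (intro braid_eq_Cons Z5(2))
  also have "\<dots> \<approx> c # b # a # b # c # Z5" using braid_eq_braid[of a b "[c]" "c # Z5"] ab by simp
  also have "\<dots> \<approx> b # c # a # b # c # Z5" using braid_eq_commute_Cons[OF cb] .
  also have "\<dots> \<approx> b # c # a # c # b # Z5" using braid_eq_commute[of b c "[b, c, a]" Z5] bc by simp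
  also have "\<dots> \<approx> b # a # c # a # b # Z5" using braid_eq_braid[of c a "[b]" "b # Z5"] ca by simp
  finally have X: "(c # a # Z1) \<approx> b # a # c # a # b # Z5" .
  have "(c # Z2) \<approx> (c # a # b # Z3)" by (intro braid_eq_Cons Z3(2))
  also have "\<dots> \<approx> c # a # b # c # a # Z5" by (intro braid_eq_Cons Z5(1))
  also have "\<dots> \<approx> c # a # c # b # a # Z5" using braid_eq_commute[of b c "[c, a]" "a # Z5"] bc by simp
  also have "\<dots> \<approx> a # c # a # b # a # Z5" using braid_eq_braid_Cons[OF ca] .
  also have "\<dots> \<approx> a # c # b # a # b # Z5" using braid_eq_braid[of a b "[a, c]" Z5] ab by simp
  also have "\<dots> \<approx> a # b # c # a # b # Z5" using braid_eq_commute[of c b "[a]" "a # b # Z5"] cb by simp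
  finally show ?thesis using X compl by auto
qed

lemma complements_compose_adjacent_adjacent:
  assumes ac: "adjacent a c" and bc: "adjacent b c" and ab: "a \<noteq> b"
    and e: "(lcm_compl c a @ Z1) \<approx> (lcm_compl c b @ Z2)" and l: "length (lcm_compl c a @ Z1) \<le> N"
  shows "\<exists>Z. (lcm_compl a c @ Z1) \<approx> lcm_compl a b @ Z \<and> (lcm_compl b c @ Z2) \<approx> lcm_compl b a @ Z"
proof -
  have ab': "distant a b" and ba: "distant b a"
    using ac bc ab unfolding distant_def adjacent_def by auto
  have ca: "adjacent c a" and cb: "adjacent c b"
    using ac bc by (simp_all add: adjacent_sym)
  have compl: "lcm_compl c a = [a, c]" "lcm_compl a c = [c, a]" "lcm_compl c b = [b, c]"
    "lcm_compl b c = [c, b]" "lcm_compl a b = [b]" "lcm_compl b a = [a]"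
    using ac bc ca cb ab' ba by (simp_all add: lcm_compl_distant lcm_compl_adjacent)
  have e': "(a # c # Z1) \<approx> (b # c # Z2)" and lZ1: "length Z1 + 2 \<le> N"
    using e l compl by simp_all
  have "length (c # Z1) < N" using lZ1 by simp
  then obtain Z3 where Z3: "(c # Z1) \<approx> (b # Z3)" "(c # Z2) \<approx> (a # Z3)"
    using distant_heads_below[OF _ ab' e'] by blast
  obtain Z4 where Z4: "Z1 \<approx> b # c # Z4" "Z3 \<approx> c # b # Z4"
    using adjacent_heads_below[OF _ cb Z3(1)] lZ1 by auto
  have "(c # Z2) \<approx> (a # c # b # Z4)"
    using braid_eq_trans[OF Z3(2) braid_eq_Cons[OF Z4(2)]] .
  moreover have "length Z2 < N" using braid_eq_length[OF e'] lZ1 by simp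
  ultimately obtain Z5 where Z5: "Z2 \<approx> a # c # Z5" "(c # b # Z4) \<approx> (c # a # Z5)"
    using adjacent_heads_below[OF _ ca] by blast
  have "length Z4 + 2 = length Z1" using braid_eq_length[OF Z4(1)] by simp
  then have "(b # Z4) \<approx> (a # Z5)" and "length Z4 < N"
    using cancel_Cons_below[OF _ Z5(2)] lZ1 by simp_all
  then obtain Z6 where Z6: "Z4 \<approx> a # Z6" "Z5 \<approx> b # Z6"
    using distant_heads_below[OF _ ba] by blast
  have "(c # a # Z1) \<approx> c # a # b # c # a # Z6"
    using braid_eq_trans[OF Z4(1) braid_eq_Cons[OF braid_eq_Cons[OF Z6(1)]]] by (intro braid_eq_Cons)
  also have "\<dots> \<approx> c # b # a # c # a # Z6" using braid_eq_commute[of a b "[c]" "c # a # Z6"] ab' by simp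
  also have "\<dots> \<approx> c # b # c # a # c # Z6" using braid_eq_braid[of a c "[c, b]" Z6] ac by simp
  also have "\<dots> \<approx> b # c # b # a # c # Z6" using braid_eq_braid_Cons[OF cb] .
  finally have X: "(c # a # Z1) \<approx> b # c # b # a # c # Z6" .
  have "(c # b # Z2) \<approx> c # b # a # c # b # Z6"
    using braid_eq_trans[OF Z5(1) braid_eq_Cons[OF braid_eq_Cons[OF Z6(2)]]] by (intro braid_eq_Cons)
  also have "\<dots> \<approx> c # a # b # c # b # Z6" using braid_eq_commute[of b a "[c]" "c # b # Z6"] ba by simp
  also have "\<dots> \<approx> c # a # c # b # c # Z6" using braid_eq_braid[of b c "[c, a]" Z6] bc by simp
  also have "\<dots> \<approx> a # c # a # b # c # Z6" using braid_eq_braid_Cons[OF ca] .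
  also have "\<dots> \<approx> a # c # b # a # c # Z6" using braid_eq_commute[of a b "[a, c]" "c # Z6"] ab' by simp
  finally show ?thesis using X compl by auto
qed

lemma complements_compose:
  assumes distinct: "a \<noteq> b" "a \<noteq> c" "b \<noteq> c"
    and e: "(lcm_compl c a @ Z1) \<approx> (lcm_compl c b @ Z2)" and l: "length (lcm_compl c a @ Z1) \<le> N"
  shows "\<exists>Z. (lcm_compl a c @ Z1) \<approx> lcm_compl a b @ Z \<and> (lcm_compl b c @ Z2) \<approx> lcm_compl b a @ Z"
proof -
  have e': "(lcm_compl c b @ Z2) \<approx> (lcm_compl c a @ Z1)" and l': "length (lcm_compl c b @ Z2) \<le> N"
    using braid_eq_sym[OF e] braid_eq_length[OF e] l by simp_all
  consider "distant a c" "distant b c"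
    | "adjacent a c" "distant b c" "distant a b" | "adjacent a c" "distant b c" "adjacent a b"
    | "distant a c" "adjacent b c" "distant a b" | "distant a c" "adjacent b c" "adjacent a b"
    | "adjacent a c" "adjacent b c"
    using distinct adjacent_if_not_distant by blast
  then show ?thesis
  proof cases
    case 1 then show ?thesis using complements_compose_distant_distant[OF _ _ _ e l] distinct by blast
  next
    case 2 then show ?thesis using complements_compose_adjacent_distant_distant[OF _ _ _ e l] by blast
  next
    case 3 then show ?thesis using complements_compose_adjacent_distant_adjacent[OF _ _ _ e l] by blast
  next
    case 4 then show ?thesis
      using complements_compose_adjacent_distant_distant[OF _ _ _ e' l'] by (blast dest: distant_sym[THEN iffD1])
  next
    case 5 then show ?thesis
      using complements_compose_adjacent_distant_adjacent[OF _ _ _ e' l'] by (blast dest: adjacent_sym[THEN iffD1])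
  next
    case 6 then show ?thesis using complements_compose_adjacent_adjacent[OF _ _ _ e l] distinct by blast
  qed
qed

lemma lcm_factored_compose:
  assumes lU: "length U = N"
    and XU: "lcm_factored a X c U" and UY: "lcm_factored c U b Y"
  shows "lcm_factored a X b Y"
proof (cases "a = c")
  case True
  with XU have "X \<approx> U" unfolding lcm_factored_def by simp
  with UY True show ?thesis using lcm_factored_cong_left by blast
next
  case ac: False
  obtain Z1 where Z1: "X \<approx> lcm_compl a c @ Z1" "U \<approx> lcm_compl c a @ Z1"
    using XU ac unfolding lcm_factored_def by auto
  show ?thesis
  proof (cases "c = b")
    case True
    with UY have "U \<approx> Y" unfolding lcm_factored_def by simp
    with XU True show ?thesis using lcm_factored_cong_right[OF braid_eq_sym] by blast
  next
    case cb: False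
    obtain Z2 where Z2: "U \<approx> lcm_compl c b @ Z2" "Y \<approx> lcm_compl b c @ Z2"
      using UY cb unfolding lcm_factored_def by auto
    show ?thesis
    proof (cases "a = b")
      case True
      have "(lcm_compl c a @ Z1) \<approx> (lcm_compl c a @ Z2)"
        using braid_eq_trans[OF braid_eq_sym[OF Z1(2)] Z2(1)] True by simp
      moreover have "length (lcm_compl c a @ Z1) \<le> N"
        using braid_eq_length[OF Z1(2)] lU by simp
      ultimately have "Z1 \<approx> Z2"
        using cancel_append_below by blast
      then have "X \<approx> lcm_compl b c @ Z2"
        using braid_eq_trans[OF Z1(1) braid_eq_append_left] True by simp
      then have "X \<approx> Y"
        using braid_eq_trans[OF _ braid_eq_sym[OF Z2(2)]] by simp
      then show ?thesis using True unfolding lcm_factored_def by simp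
    next
      case False
      have "(lcm_compl c a @ Z1) \<approx> (lcm_compl c b @ Z2)" and "length (lcm_compl c a @ Z1) \<le> N"
        using braid_eq_trans[OF braid_eq_sym[OF Z1(2)] Z2(1)] braid_eq_length[OF Z1(2)] lU by simp_all
      then obtain Z where "(lcm_compl a c @ Z1) \<approx> lcm_compl a b @ Z" "(lcm_compl b c @ Z2) \<approx> lcm_compl b a @ Z"
        using complements_compose False ac cb by blast
      then show ?thesis
        using braid_eq_trans[OF Z1(1)] braid_eq_trans[OF Z2(2)] False unfolding lcm_factored_def by blast
    qed
  qed
qed

end

text \<open>Along the chain of elementary steps from \<open>a # X\<close> to \<open>b # Y\<close> every
  intermediate word \<open>c # U\<close> has \<open>length U = length X\<close>, so the composition step applies by
  induction on the length.\<close>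

theorem lcm_factored_if_braid_eq: "(a # X) \<approx> (b # Y) \<Longrightarrow> lcm_factored a X b Y"
proof (induction "length X" arbitrary: a X b Y rule: less_induct)
  case less
  have below: "lcm_factored_below (length X)"
    unfolding lcm_factored_below_def using less.hyps by blast
  have "\<forall>c U. W = c # U \<longrightarrow> lcm_factored a X c U" if "(a # X) \<approx> W" for W
    using that unfolding braid_eq_def
  proof (induction rule: rtranclp_induct)
    case base then show ?case unfolding lcm_factored_def by simp
  next
    case (step W W')
    show ?case
    proof (intro allI impI)
      fix b Y assume W': "W' = b # Y"
      have "length W = Suc (length X)"
        using step(1) braid_eq_length unfolding braid_eq_def by fastforce
      then obtain c U where W: "W = c # U" and lU: "length U = length X"
        by (cases W) auto
      have "lcm_factored a X c U" using step(3) W by simp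
      moreover have "lcm_factored c U b Y" using lcm_factored_braid_step step(2) W W' by simp
      ultimately show "lcm_factored a X b Y" by (rule lcm_factored_compose[OF below lU])
    qed
  qed
  then show ?case using less.prems by blast
qed

corollary braid_eq_Cons_cancel: "(a # X) \<approx> (a # Y) \<Longrightarrow> X \<approx> Y"
  using lcm_factored_if_braid_eq unfolding lcm_factored_def by blast

corollary braid_eq_append_cancel: "(w @ X) \<approx> (w @ Y) \<Longrightarrow> X \<approx> Y"
  by (induction w) (auto intro: braid_eq_Cons_cancel)

section \<open>Left divisibility and least common multiples\<close>

definition left_divides :: "nat list \<Rightarrow> nat list \<Rightarrow> bool" (infix "\<preceq>" 50) where
  "p \<preceq> u \<longleftrightarrow> (\<exists>z. (p @ z) \<approx> u)"

lemma left_divides_append [simp]: "p \<preceq> p @ z"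
  unfolding left_divides_def using braid_eq_refl by blast

lemma left_divides_refl [simp]: "p \<preceq> p"
  using left_divides_append[of p "[]"] by simp

lemma left_divides_Nil [simp]: "[] \<preceq> u"
  unfolding left_divides_def using braid_eq_refl by (metis append_Nil)

lemma left_divides_trans: "p \<preceq> q \<Longrightarrow> q \<preceq> r \<Longrightarrow> p \<preceq> r"
proof -
  assume "p \<preceq> q" "q \<preceq> r"
  then obtain z z' where z: "(p @ z) \<approx> q" and z': "(q @ z') \<approx> r"
    unfolding left_divides_def by blast
  have "(p @ z @ z') \<approx> r"
    using braid_eq_trans[OF braid_eq_append_right[OF z] z'] by simp
  then show "p \<preceq> r" unfolding left_divides_def by blast
qed

lemma left_divides_braid_eq_trans: "p \<preceq> u \<Longrightarrow> u \<approx> u' \<Longrightarrow> p \<preceq> u'"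
  unfolding left_divides_def using braid_eq_trans by blast

lemma braid_eq_left_divides_trans: "p \<approx> p' \<Longrightarrow> p' \<preceq> u \<Longrightarrow> p \<preceq> u"
  unfolding left_divides_def using braid_eq_trans[OF braid_eq_append_right] by blast

lemma left_divides_append_iff [simp]: "w @ p \<preceq> w @ m \<longleftrightarrow> p \<preceq> m"
  unfolding left_divides_def
  by (metis append.assoc braid_eq_append_cancel braid_eq_append_left)

lemma left_divides_Cons_iff [simp]: "a # p \<preceq> a # m \<longleftrightarrow> p \<preceq> m"
  using left_divides_append_iff[of "[a]"] by simp

lemma left_divides_appendD: "p @ q \<preceq> m \<Longrightarrow> p \<preceq> m"
  unfolding left_divides_def by (metis append.assoc)

lemma left_divides_length: "p \<preceq> m \<Longrightarrow> length p \<le> length m"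
  unfolding left_divides_def by (auto dest: braid_eq_length)

lemma lcm_of_generators_left_divides:
  assumes "a \<noteq> b" "[a] \<preceq> m" "[b] \<preceq> m"
  shows "\<exists>r. m \<approx> a # lcm_compl a b @ r"
proof -
  obtain X Y where X: "(a # X) \<approx> m" and Y: "(b # Y) \<approx> m"
    using assms unfolding left_divides_def by auto
  have "lcm_factored a X b Y"
    using lcm_factored_if_braid_eq[OF braid_eq_trans[OF X braid_eq_sym[OF Y]]] .
  then obtain Z where "X \<approx> lcm_compl a b @ Z"
    using assms(1) unfolding lcm_factored_def by auto
  then show ?thesis
    using braid_eq_trans[OF braid_eq_sym[OF X] braid_eq_Cons] by auto
qed

lemma lcm_compl_commute_append: "a \<noteq> b \<Longrightarrow> (a # lcm_compl a b @ r) \<approx> (b # lcm_compl b a @ r)"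
  using braid_eq_append_right[OF lcm_compl_commute] by simp

definition is_lcm :: "nat list \<Rightarrow> nat list \<Rightarrow> nat list \<Rightarrow> bool" where
  "is_lcm p q L \<longleftrightarrow> p \<preceq> L \<and> q \<preceq> L \<and> (\<forall>m. p \<preceq> m \<longrightarrow> q \<preceq> m \<longrightarrow> L \<preceq> m)"

lemma is_lcm_braid_eq: "is_lcm p q L \<Longrightarrow> L \<approx> L' \<Longrightarrow> is_lcm p q L'"
  using braid_eq_left_divides_trans[OF braid_eq_sym] left_divides_braid_eq_trans
  unfolding is_lcm_def by metis

lemma is_lcm_Cons: "is_lcm p q L \<Longrightarrow> is_lcm (a # p) (a # q) (a # L)"
  unfolding is_lcm_def
proof (intro conjI allI impI; (elim conjE)?)
  fix m assume lcm: "\<forall>m. p \<preceq> m \<longrightarrow> q \<preceq> m \<longrightarrow> L \<preceq> m" and m: "a # p \<preceq> m" "a # q \<preceq> m"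
  obtain z where z: "(a # p @ z) \<approx> m" using m(1) unfolding left_divides_def by auto
  have "a # q \<preceq> a # p @ z" using m(2) braid_eq_sym[OF z] by (rule left_divides_braid_eq_trans)
  then have "L \<preceq> p @ z" using lcm by simp
  then have "a # L \<preceq> a # p @ z" by simp
  then show "a # L \<preceq> m" using z by (rule left_divides_braid_eq_trans)
qed simp_all

text \<open>Writing \<open>C\<close>, \<open>C'\<close> for the complements of \<open>\<sigma>\<^sub>a\<close>, \<open>\<sigma>\<^sub>b\<close> in their lcm, the lcm of \<open>a # p\<close> and
  \<open>b # q\<close> is \<open>a # C @ L\<close>, where \<open>C @ M\<^sub>1\<close> = lcm(\<open>p\<close>, \<open>C\<close>), \<open>C' @ M\<^sub>2\<close> = lcm(\<open>q\<close>, \<open>C'\<close>) and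
  \<open>L\<close> = lcm(\<open>M\<^sub>1\<close>, \<open>M\<^sub>2\<close>).\<close>

lemma is_lcm_Cons_distinct:
  assumes ab: "a \<noteq> b"
    and L1: "is_lcm p (lcm_compl a b) (lcm_compl a b @ M1)"
    and L2: "is_lcm q (lcm_compl b a) (lcm_compl b a @ M2)"
    and L: "is_lcm M1 M2 L"
  shows "is_lcm (a # p) (b # q) (a # lcm_compl a b @ L)"
  unfolding is_lcm_def
proof (intro conjI allI impI)
  have M1L: "lcm_compl a b @ M1 \<preceq> lcm_compl a b @ L" and M2L: "lcm_compl b a @ M2 \<preceq> lcm_compl b a @ L"
    using L unfolding is_lcm_def by simp_all
  have "p \<preceq> lcm_compl a b @ L"
    using left_divides_trans[OF _ M1L] L1 unfolding is_lcm_def by blast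
  then show "a # p \<preceq> a # lcm_compl a b @ L" by simp
  have "q \<preceq> lcm_compl b a @ L"
    using left_divides_trans[OF _ M2L] L2 unfolding is_lcm_def by blast
  then have "b # q \<preceq> b # lcm_compl b a @ L" by simp
  then show "b # q \<preceq> a # lcm_compl a b @ L"
    using braid_eq_sym[OF lcm_compl_commute_append[OF ab]] by (rule left_divides_braid_eq_trans)
next
  fix m assume m: "a # p \<preceq> m" "b # q \<preceq> m"
  have heads: "[a] \<preceq> m" "[b] \<preceq> m"
    using left_divides_appendD[of "[a]" p m] left_divides_appendD[of "[b]" q m] m by simp_all
  obtain r where r: "m \<approx> a # lcm_compl a b @ r"
    using lcm_of_generators_left_divides[OF ab heads] by blast
  have r': "m \<approx> b # lcm_compl b a @ r"
    using braid_eq_trans[OF r lcm_compl_commute_append[OF ab]] .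
  have "p \<preceq> lcm_compl a b @ r"
    using left_divides_braid_eq_trans[OF m(1) r] by simp
  then have "lcm_compl a b @ M1 \<preceq> lcm_compl a b @ r"
    using L1 left_divides_append unfolding is_lcm_def by blast
  moreover have "q \<preceq> lcm_compl b a @ r"
    using left_divides_braid_eq_trans[OF m(2) r'] by simp
  then have "lcm_compl b a @ M2 \<preceq> lcm_compl b a @ r"
    using L2 left_divides_append unfolding is_lcm_def by blast
  ultimately have "L \<preceq> r" using L unfolding is_lcm_def by simp
  then have "a # lcm_compl a b @ L \<preceq> a # lcm_compl a b @ r"
    using left_divides_append_iff[of "a # lcm_compl a b"] by simp
  then show "a # lcm_compl a b @ L \<preceq> m"
    using braid_eq_sym[OF r] by (rule left_divides_braid_eq_trans)
qed

lemma is_lcm_right_multiple: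
  assumes L: "is_lcm p q L"
  shows "\<exists>M. is_lcm p q (q @ M)"
proof -
  obtain M where "(q @ M) \<approx> L" using L unfolding is_lcm_def left_divides_def by blast
  then show ?thesis using is_lcm_braid_eq[OF L braid_eq_sym] by blast
qed

lemma is_lcm_exists_Cons_distinct:
  assumes ab: "a \<noteq> b" and pu: "a # p \<preceq> u" and qu: "b # q \<preceq> u"
    and IH: "\<And>u' p q. length u' < length u \<Longrightarrow> p \<preceq> u' \<Longrightarrow> q \<preceq> u' \<Longrightarrow> \<exists>L. is_lcm p q L"
  shows "\<exists>L. is_lcm (a # p) (b # q) L"
proof -
  have heads: "[a] \<preceq> u" "[b] \<preceq> u"
    using left_divides_appendD[of "[a]" p u] left_divides_appendD[of "[b]" q u] pu qu by simp_all
  obtain r where r: "u \<approx> a # lcm_compl a b @ r"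
    using lcm_of_generators_left_divides[OF ab heads] by blast
  have r': "u \<approx> b # lcm_compl b a @ r"
    using braid_eq_trans[OF r lcm_compl_commute_append[OF ab]] .
  have lr: "length (lcm_compl a b @ r) < length u" "length (lcm_compl b a @ r) < length u"
      "length r < length u"
    using braid_eq_length[OF r] braid_eq_length[OF r'] by auto
  have pr: "p \<preceq> lcm_compl a b @ r" and qr: "q \<preceq> lcm_compl b a @ r"
    using left_divides_braid_eq_trans[OF pu r] left_divides_braid_eq_trans[OF qu r'] by simp_all
  obtain M1 where L1: "is_lcm p (lcm_compl a b) (lcm_compl a b @ M1)"
    using IH[OF lr(1) pr] is_lcm_right_multiple left_divides_append by blast
  obtain M2 where L2: "is_lcm q (lcm_compl b a) (lcm_compl b a @ M2)"
    using IH[OF lr(2) qr] is_lcm_right_multiple left_divides_append by blast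
  have "lcm_compl a b @ M1 \<preceq> lcm_compl a b @ r"
    using L1 pr left_divides_append unfolding is_lcm_def by blast
  moreover have "lcm_compl b a @ M2 \<preceq> lcm_compl b a @ r"
    using L2 qr left_divides_append unfolding is_lcm_def by blast
  ultimately obtain L where "is_lcm M1 M2 L"
    using IH[OF lr(3)] by auto
  then show ?thesis using is_lcm_Cons_distinct[OF ab L1 L2] by blast
qed

theorem is_lcm_exists: "p \<preceq> u \<Longrightarrow> q \<preceq> u \<Longrightarrow> \<exists>L. is_lcm p q L"
proof (induction "length u" arbitrary: u p q rule: less_induct)
  case less
  show ?case
  proof (cases p)
    case Nil then show ?thesis unfolding is_lcm_def by (intro exI[of _ q]) auto
  next
    case p: (Cons a p1)
    show ?thesis
    proof (cases q)
      case Nil then show ?thesis unfolding is_lcm_def by (intro exI[of _ p]) auto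
    next
      case q: (Cons b q1)
      show ?thesis
      proof (cases "a = b")
        case True
        obtain s where s: "(a # p1 @ s) \<approx> u" using less.prems(1) p unfolding left_divides_def by auto
        have "a # q1 \<preceq> u" using less.prems(2) q True by simp
        then have "a # q1 \<preceq> a # p1 @ s"
          using braid_eq_sym[OF s] by (rule left_divides_braid_eq_trans)
        then have "q1 \<preceq> p1 @ s" by simp
        moreover have "length (p1 @ s) < length u" using braid_eq_length[OF s] by simp
        ultimately obtain L where "is_lcm p1 q1 L" using less.hyps[of "p1 @ s" p1 q1] by auto
        then show ?thesis using is_lcm_Cons p q True by blast
      next
        case False
        then show ?thesis using is_lcm_exists_Cons_distinct less p q by blast
      qed
    qed
  qed
qed

section \<open>Strands and crossings\<close>

text \<open>A braid word acts on strand positions \<open>1, 2, \<dots>\<close>: the letter \<open>a\<close> exchanges the strands at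
  positions \<open>a\<close> and \<open>a + 1\<close>.  \<open>strand_pos w p\<close> is the final position of the strand starting at
  \<open>p\<close>, and \<open>crossings w p q\<close> counts how often the strands starting at \<open>p\<close> and \<open>q\<close> cross.\<close>

definition gen_perm :: "nat \<Rightarrow> nat \<Rightarrow> nat" where
  "gen_perm a p = (if p = a then Suc a else if p = Suc a then a else p)"

fun strand_pos :: "nat list \<Rightarrow> nat \<Rightarrow> nat" where
  "strand_pos [] p = p"
| "strand_pos (a # w) p = strand_pos w (gen_perm a p)"

definition exchanges :: "nat \<Rightarrow> nat \<Rightarrow> nat \<Rightarrow> bool" where
  "exchanges a p q \<longleftrightarrow> (p = a \<and> q = Suc a) \<or> (q = a \<and> p = Suc a)"

fun crossings :: "nat list \<Rightarrow> nat \<Rightarrow> nat \<Rightarrow> nat" where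
  "crossings [] p q = 0"
| "crossings (a # w) p q =
     (if exchanges a p q then 1 else 0) + crossings w (gen_perm a p) (gen_perm a q)"

definition reduced :: "nat list \<Rightarrow> bool" where
  "reduced w \<longleftrightarrow> (\<forall>p q. crossings w p q \<le> 1)"

lemma gen_perm_gen_perm [simp]: "gen_perm a (gen_perm a p) = p"
  unfolding gen_perm_def by auto

lemma gen_perm_eq_iff [simp]: "gen_perm a p = gen_perm a q \<longleftrightarrow> p = q"
  unfolding gen_perm_def by auto

lemma exchanges_gen_perm [simp]: "exchanges a (gen_perm a p) (gen_perm a q) = exchanges a p q"
  unfolding exchanges_def gen_perm_def by auto

lemma exchanges_sym: "exchanges a p q = exchanges a q p"
  unfolding exchanges_def by auto

lemma strand_pos_append [simp]: "strand_pos (u @ v) p = strand_pos v (strand_pos u p)"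
  by (induction u arbitrary: p) auto

lemma crossings_append:
  "crossings (u @ v) p q = crossings u p q + crossings v (strand_pos u p) (strand_pos u q)"
  by (induction u arbitrary: p q) auto

lemma crossings_sym: "crossings w p q = crossings w q p"
  by (induction w arbitrary: p q) (auto simp: exchanges_sym)

lemma strand_pos_eq_iff [simp]: "strand_pos w p = strand_pos w q \<longleftrightarrow> p = q"
  by (induction w arbitrary: p q) auto

lemma strand_pos_rev_strand_pos [simp]: "strand_pos (rev w) (strand_pos w p) = p"
  by (induction w arbitrary: p) auto

lemma strand_pos_strand_pos_rev [simp]: "strand_pos w (strand_pos (rev w) p) = p"
  using strand_pos_rev_strand_pos[of "rev w" p] by simp

lemma crossings_rev: "crossings (rev w) (strand_pos w p) (strand_pos w q) = crossings w p q"
proof (induction w arbitrary: p q)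
  case (Cons a w)
  show ?case using Cons.IH[of "gen_perm a p" "gen_perm a q"] by (simp add: crossings_append)
qed simp

lemma braid_step_invariants: "braid_step u v \<Longrightarrow> strand_pos u = strand_pos v \<and> crossings u = crossings v"
proof (induction rule: braid_step.induct)
  case (comm i j u v)
  then have "strand_pos [i, j] = strand_pos [j, i]" "crossings [i, j] = crossings [j, i]"
    by (auto simp: fun_eq_iff gen_perm_def exchanges_def)
  then show ?case by (simp only: fun_eq_iff crossings_append strand_pos_append) simp
next
  case (braid j i u v)
  then have "strand_pos [i, j, i] = strand_pos [j, i, j]" "crossings [i, j, i] = crossings [j, i, j]"
    by (auto simp: fun_eq_iff gen_perm_def exchanges_def)
  then show ?case by (simp only: fun_eq_iff crossings_append strand_pos_append) simp
qed

lemma braid_eq_strand_pos: "u \<approx> v \<Longrightarrow> strand_pos u p = strand_pos v p"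
  unfolding braid_eq_def by (induction rule: rtranclp_induct) (auto dest: braid_step_invariants)

lemma braid_eq_crossings: "u \<approx> v \<Longrightarrow> crossings u p q = crossings v p q"
  unfolding braid_eq_def by (induction rule: rtranclp_induct) (auto dest: braid_step_invariants)

lemma braid_eq_reduced: "u \<approx> v \<Longrightarrow> reduced u = reduced v"
  unfolding reduced_def using braid_eq_crossings by metis

lemma strand_pos_less_iff:
  "p \<noteq> q \<Longrightarrow> strand_pos w p < strand_pos w q \<longleftrightarrow> (p < q \<longleftrightarrow> even (crossings w p q))"
proof (induction w arbitrary: p q)
  case (Cons a w)
  have "gen_perm a p < gen_perm a q \<longleftrightarrow> (p < q) \<noteq> exchanges a p q"
    using Cons.prems unfolding gen_perm_def exchanges_def by auto
  with Cons.IH[of "gen_perm a p" "gen_perm a q"] Cons.prems show ?case by auto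
qed simp

lemma odd_crossings_between:
  assumes "p < q" "q < r" "odd (crossings w p r)"
  shows "odd (crossings w p q) \<or> odd (crossings w q r)"
  using strand_pos_less_iff[of p q w] strand_pos_less_iff[of q r w] strand_pos_less_iff[of p r w] assms
  by auto

lemma reduced_crossings_le: "reduced w \<Longrightarrow> crossings w p q \<le> 1"
  unfolding reduced_def by blast

lemma reduced_appendD1: "reduced (u @ v) \<Longrightarrow> reduced u"
  unfolding reduced_def by (metis crossings_append le_add1 le_trans)

lemma reduced_appendD2: "reduced (u @ v) \<Longrightarrow> reduced v"
  unfolding reduced_def
proof (intro allI)
  fix p q assume "\<forall>p q. crossings (u @ v) p q \<le> 1"
  then have "crossings (u @ v) (strand_pos (rev u) p) (strand_pos (rev u) q) \<le> 1" by blast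
  then show "crossings v p q \<le> 1" unfolding crossings_append by simp
qed

lemma reduced_rev: "reduced w \<Longrightarrow> reduced (rev w)"
  unfolding reduced_def
  by (metis crossings_rev strand_pos_strand_pos_rev)

text \<open>The heart of the exchange argument for \<open>z = b # w\<close> with \<open>b\<close> adjacent to \<open>a\<close>: if the strands
  at \<open>a\<close>, \<open>a + 1\<close> cross in \<open>z\<close>, they already cross in \<open>w\<close> (the third strand involved in \<open>b\<close> lies
  between them), and after \<open>\<sigma>\<^sub>a\<close> has been split off \<open>w\<close> the strands at \<open>b\<close>, \<open>b + 1\<close> cross.\<close>

lemma reduced_Cons_adjacent_crossings:
  assumes red: "reduced (b # w)" and ab: "adjacent a b" and cross: "crossings (b # w) a (Suc a) = 1"
  shows "crossings w a (Suc a) = 1" and "w \<approx> a # w' \<Longrightarrow> crossings w' b (Suc b) = 1"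
proof -
  have le1: "crossings w p q \<le> 1" for p q
    using reduced_crossings_le[OF reduced_appendD2[of "[b]" w]] red by simp
  have zle1: "crossings (b # w) p q \<le> 1" for p q
    using reduced_crossings_le[OF red] .
  consider "b = Suc a" | "a = Suc b" using ab unfolding adjacent_def by blast
  then have "crossings w a (Suc a) = 1 \<and> (w \<approx> a # w' \<longrightarrow> crossings w' b (Suc b) = 1)"
  proof cases
    case 1
    have outer: "crossings w a (Suc (Suc a)) = 1"
      using cross 1 by (simp add: gen_perm_def exchanges_def)
    have "crossings (b # w) (Suc a) (Suc (Suc a)) = 1 + crossings w (Suc (Suc a)) (Suc a)"
      using 1 by (simp add: gen_perm_def exchanges_def)
    then have "crossings w (Suc a) (Suc (Suc a)) = 0"
      using zle1[of "Suc a" "Suc (Suc a)"] crossings_sym[of w] by simp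
    then have "crossings w a (Suc a) = 1"
      using odd_crossings_between[of a "Suc a" "Suc (Suc a)" w] outer le1[of a "Suc a"] by (auto simp: le_Suc_eq)
    moreover have "crossings w' b (Suc b) = 1" if "w \<approx> a # w'"
      using outer braid_eq_crossings[OF that] 1 by (simp add: gen_perm_def exchanges_def)
    ultimately show ?thesis by blast
  next
    case 2
    have outer: "crossings w b (Suc a) = 1"
      using cross 2 by (simp add: gen_perm_def exchanges_def)
    have "crossings (b # w) b a = 1 + crossings w a b"
      using 2 by (simp add: gen_perm_def exchanges_def)
    then have "crossings w b a = 0"
      using zle1[of b a] crossings_sym[of w] by simp
    then have "crossings w a (Suc a) = 1"
      using odd_crossings_between[of b a "Suc a" w] outer le1[of a "Suc a"] 2 by (auto simp: le_Suc_eq)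
    moreover have "crossings w' b (Suc b) = 1" if "w \<approx> a # w'"
      using outer braid_eq_crossings[OF that] 2 by (simp add: gen_perm_def exchanges_def)
    ultimately show ?thesis by blast
  qed
  then show "crossings w a (Suc a) = 1" and "w \<approx> a # w' \<Longrightarrow> crossings w' b (Suc b) = 1"
    by blast+
qed

theorem reduced_crossing_left_divisor:
  "reduced z \<Longrightarrow> crossings z a (Suc a) = 1 \<Longrightarrow> \<exists>z'. z \<approx> a # z'"
proof (induction "length z" arbitrary: z a rule: less_induct)
  case less
  obtain b w where z: "z = b # w" using less.prems by (cases z) auto
  have red_w: "reduced w" using reduced_appendD2[of "[b]" w] less.prems z by simp
  consider "b = a" | "distant b a" | "adjacent a b"
    using adjacent_if_not_distant[of b a] by (auto simp: adjacent_sym)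
  then show ?case
  proof cases
    case 1 then show ?thesis using z braid_eq_refl by blast
  next
    case 2
    then have "crossings w a (Suc a) = 1"
      using less.prems(2) z 2 by (auto simp: distant_def gen_perm_def exchanges_def)
    then obtain w1 where w1: "w \<approx> a # w1" using less.hyps[of w a] red_w z by auto
    have "z \<approx> b # a # w1" using z w1 by (simp add: braid_eq_Cons)
    also have "\<dots> \<approx> a # b # w1" using braid_eq_commute_Cons[OF 2] .
    finally show ?thesis by blast
  next
    case 3
    have red_bw: "reduced (b # w)" using less.prems z by simp
    have cross: "crossings (b # w) a (Suc a) = 1" using less.prems z by simp
    obtain w1 where w1: "w \<approx> a # w1"
      using less.hyps[of w a] reduced_Cons_adjacent_crossings(1)[OF red_bw 3 cross] red_w z by auto
    have "reduced w1" using reduced_appendD2[of "[a]" w1] braid_eq_reduced[OF w1] red_w by simp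
    moreover have "length w1 < length z" using braid_eq_length[OF w1] z by simp
    ultimately obtain w2 where w2: "w1 \<approx> b # w2"
      using less.hyps reduced_Cons_adjacent_crossings(2)[OF red_bw 3 cross w1] by blast
    have "z \<approx> b # a # w1" using z w1 by (simp add: braid_eq_Cons)
    also have "\<dots> \<approx> b # a # b # w2" by (intro braid_eq_Cons w2)
    also have "\<dots> \<approx> a # b # a # w2" using braid_eq_braid_Cons[of b a w2] 3 by (simp add: adjacent_sym)
    finally show ?thesis by blast
  qed
qed

corollary reduced_crossing_right_divisor:
  assumes "reduced z" "crossings z p q = 1" "strand_pos z p = a" "strand_pos z q = Suc a"
  shows "\<exists>z'. z \<approx> z' @ [a]"
proof -
  have "crossings (rev z) a (Suc a) = 1" using crossings_rev[of z p q] assms by simp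
  then obtain y where "rev z \<approx> a # y"
    using reduced_crossing_left_divisor reduced_rev[OF assms(1)] by blast
  then have "rev (rev z) \<approx> rev (a # y)" by (rule braid_eq_rev)
  then show ?thesis by auto
qed

section \<open>Simple braids and normal pairs\<close>

lemma strand_pos_untouched: "\<forall>a \<in> set w. p \<noteq> a \<and> p \<noteq> Suc a \<Longrightarrow> strand_pos w p = p"
  by (induction w) (auto simp: gen_perm_def)

lemma crossings_untouched: "\<forall>a \<in> set w. p \<noteq> a \<and> p \<noteq> Suc a \<Longrightarrow> crossings w p q = 0"
  by (induction w arbitrary: q) (auto simp: gen_perm_def exchanges_def)

lemma strand_pos_bounds:
  "set w \<subseteq> {1..<m} \<Longrightarrow> 1 \<le> p \<Longrightarrow> p \<le> m \<Longrightarrow> 1 \<le> strand_pos w p \<and> strand_pos w p \<le> m"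
proof (induction w arbitrary: p)
  case (Cons a w)
  then have "1 \<le> gen_perm a p \<and> gen_perm a p \<le> m" unfolding gen_perm_def by auto
  then show ?case using Cons by simp
qed simp

lemma strand_pos_upt:
  "k \<le> j \<Longrightarrow> strand_pos [k..<j] p = (if p = k then j else if k < p \<and> p \<le> j then p - 1 else p)"
proof (induction j)
  case (Suc j)
  then show ?case
    by (cases "k = Suc j") (auto simp: gen_perm_def)
qed simp

lemma crossings_upt:
  "k \<le> j \<Longrightarrow>
   crossings [k..<j] p q = (if (p = k \<and> k < q \<and> q \<le> j) \<or> (q = k \<and> k < p \<and> p \<le> j) then 1 else 0)"
proof (induction j)
  case (Suc j)
  show ?case
  proof (cases "k = Suc j")
    case False
    then have kj: "k \<le> j" using Suc.prems by simp
    have "exchanges j (strand_pos [k..<j] p) (strand_pos [k..<j] q) \<longleftrightarrow>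
        (p = k \<and> q = Suc j) \<or> (q = k \<and> p = Suc j)"
      using kj unfolding exchanges_def strand_pos_upt[OF kj] by auto
    then show ?thesis using kj Suc.IH by (auto simp: crossings_append le_Suc_eq)
  qed simp
qed auto

lemma set_Delta: "set (Delta m) \<subseteq> {1..<m}"
  by (induction m) auto

lemma Delta_in_words: "Delta m \<in> words m"
  using set_Delta unfolding words_def by auto

lemma crossings_Delta:
  "crossings (Delta m) p q = (if p \<noteq> q \<and> 1 \<le> p \<and> p \<le> m \<and> 1 \<le> q \<and> q \<le> m then 1 else 0)"
proof (induction m arbitrary: p q)
  case (Suc m)
  define P Q where "P = strand_pos [1..<Suc m] p" and "Q = strand_pos [1..<Suc m] q"
  have split: "crossings (Delta (Suc m)) p q = crossings [1..<Suc m] p q + crossings (Delta m) P Q"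
    unfolding P_def Q_def by (simp add: crossings_append del: upt_Suc)
  have PQ: "P \<noteq> Q \<longleftrightarrow> p \<noteq> q" unfolding P_def Q_def by simp
  have P: "1 \<le> P \<and> P \<le> m \<longleftrightarrow> 2 \<le> p \<and> p \<le> Suc m"
    unfolding P_def using strand_pos_upt[of 1 "Suc m" p] by auto
  have Q: "1 \<le> Q \<and> Q \<le> m \<longleftrightarrow> 2 \<le> q \<and> q \<le> Suc m"
    unfolding Q_def using strand_pos_upt[of 1 "Suc m" q] by auto
  have first: "crossings [1..<Suc m] p q =
      (if (p = 1 \<and> 1 < q \<and> q \<le> Suc m) \<or> (q = 1 \<and> 1 < p \<and> p \<le> Suc m) then 1 else 0)"
    using crossings_upt[of 1 "Suc m" p q] by simp
  show ?case unfolding split Suc.IH[of P Q] first using PQ P Q by auto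
qed simp

lemma reduced_Delta: "reduced (Delta m)"
  unfolding reduced_def crossings_Delta by simp

lemma reduced_if_left_divides_Delta: "x \<preceq> Delta m \<Longrightarrow> reduced x"
  unfolding left_divides_def
  using braid_eq_reduced reduced_Delta reduced_appendD1 by blast

text \<open>Conversely a reduced word is a left divisor of \<open>\<Delta>\<^sub>m\<close>: when a letter \<open>a\<close> is appended to a
  left divisor \<open>w\<close> of \<open>\<Delta>\<^sub>m\<close>, the two strands it exchanges have not crossed in \<open>w\<close>, so they
  cross in the complement of \<open>w\<close> in \<open>\<Delta>\<^sub>m\<close>, which therefore starts with \<open>a\<close>.\<close>

theorem left_divides_Delta_if_reduced: "set w \<subseteq> {1..<m} \<Longrightarrow> reduced w \<Longrightarrow> w \<preceq> Delta m"
proof (induction w rule: rev_induct)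
  case (snoc a w)
  have red_w: "reduced w" and w: "set w \<subseteq> {1..<m}" and a: "a \<in> {1..<m}"
    using reduced_appendD1 snoc.prems by auto
  obtain z where z: "(w @ z) \<approx> Delta m" using snoc.IH w red_w unfolding left_divides_def by blast
  define P Q where "P = strand_pos (rev w) a" and "Q = strand_pos (rev w) (Suc a)"
  have PQ: "strand_pos w P = a" "strand_pos w Q = Suc a" unfolding P_def Q_def by simp_all
  have "1 \<le> P \<and> P \<le> m" "1 \<le> Q \<and> Q \<le> m" "P \<noteq> Q"
    using a w strand_pos_bounds[of "rev w" m a] strand_pos_bounds[of "rev w" m "Suc a"]
    unfolding P_def Q_def by auto
  then have "crossings (w @ z) P Q = 1"
    using braid_eq_crossings[OF z] by (simp add: crossings_Delta)
  moreover have "crossings (w @ [a]) P Q \<le> 1" using reduced_crossings_le snoc.prems(2) .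
  then have "crossings w P Q = 0" using PQ by (simp add: crossings_append exchanges_def)
  ultimately have "crossings z a (Suc a) = 1" using PQ by (simp add: crossings_append)
  moreover have "reduced z"
    using braid_eq_reduced[OF z] reduced_Delta reduced_appendD2 by blast
  ultimately obtain z' where z': "z \<approx> a # z'"
    using reduced_crossing_left_divisor by blast
  have "((w @ [a]) @ z') \<approx> (w @ z)"
    using braid_eq_append_left[OF braid_eq_sym[OF z'], of w] by simp
  then show ?case
    unfolding left_divides_def using braid_eq_trans[OF _ z] by blast
qed simp

lemma words_append: "x \<in> words m \<Longrightarrow> y \<in> words m \<Longrightarrow> x @ y \<in> words m"
  unfolding words_def by auto

text \<open>Divisibility in \<open>B\<^sub>m\<^sup>+\<close>, as defined via cofactors in \<open>words m\<close>, agrees with \<open>\<preceq>\<close>, because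
  braid equivalent words contain the same letters.\<close>

lemma ldiv_iff_left_divides: "y \<in> words m \<Longrightarrow> ldiv m x y \<longleftrightarrow> x \<preceq> y"
  unfolding ldiv_def left_divides_def words_def
proof safe
  fix z assume "set y \<subseteq> {1..<m}" "(x @ z) \<approx> y"
  then show "\<exists>z \<in> {w. set w \<subseteq> {1..<m}}. (x @ z) \<approx> y" using braid_eq_set by fastforce
qed auto

lemma rdiv_iff: "y \<in> words m \<Longrightarrow> rdiv m x y \<longleftrightarrow> (\<exists>z. (z @ x) \<approx> y)"
  unfolding rdiv_def words_def
proof safe
  fix z assume "set y \<subseteq> {1..<m}" "(z @ x) \<approx> y"
  then show "\<exists>z \<in> {w. set w \<subseteq> {1..<m}}. (z @ x) \<approx> y" using braid_eq_set by fastforce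
qed auto

lemma mem_D_L_iff: "y \<in> words m \<Longrightarrow> i \<in> D_L m y \<longleftrightarrow> i \<in> {1..<m} \<and> [i] \<preceq> y"
  unfolding D_L_def using ldiv_iff_left_divides by auto

lemma mem_D_R_iff: "x \<in> words m \<Longrightarrow> i \<in> D_R m x \<longleftrightarrow> i \<in> {1..<m} \<and> (\<exists>z. (z @ [i]) \<approx> x)"
  unfolding D_R_def using rdiv_iff by auto

lemma not_reduced_square: "\<not> reduced (z @ [c, c] @ t)"
proof
  assume "reduced (z @ [c, c] @ t)"
  then have "reduced [c, c]" using reduced_appendD1 reduced_appendD2 by blast
  then have "crossings [c, c] c (Suc c) \<le> 1" by (rule reduced_crossings_le)
  then show False by (simp add: gen_perm_def exchanges_def)
qed

lemma reduced_snoc_if_not_mem_D_R: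
  assumes x: "x \<in> words m" "reduced x" and i: "i \<in> {1..<m}" "i \<notin> D_R m x"
  shows "reduced (x @ [i])"
proof (rule ccontr)
  assume "\<not> reduced (x @ [i])"
  then obtain p q where "crossings (x @ [i]) p q > 1" unfolding reduced_def by (meson not_le)
  moreover have "crossings x p q \<le> 1" using reduced_crossings_le[OF x(2)] .
  ultimately have ex: "exchanges i (strand_pos x p) (strand_pos x q)" and cr: "crossings x p q = 1"
    by (auto simp: crossings_append split: if_splits)
  have "\<exists>z. x \<approx> z @ [i]"
  proof (cases "strand_pos x p = i")
    case True
    then show ?thesis
      using reduced_crossing_right_divisor[OF x(2) cr] ex unfolding exchanges_def by auto
  next
    case False
    then show ?thesis
      using reduced_crossing_right_divisor[OF x(2), of q p i] cr ex crossings_sym[of x]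
      unfolding exchanges_def by auto
  qed
  then have "i \<in> D_R m x" using mem_D_R_iff[OF x(1)] i(1) braid_eq_sym by blast
  then show False using i(2) by simp
qed

lemma D_L_subset_D_R_if_normal:
  assumes x: "x \<in> words m" "reduced x" and y: "y \<in> words m" and N: "normal m x y"
  shows "D_L m y \<subseteq> D_R m x"
proof
  fix i assume "i \<in> D_L m y"
  then have i: "i \<in> {1..<m}" "[i] \<preceq> y" using mem_D_L_iff[OF y] by auto
  show "i \<in> D_R m x"
  proof (rule ccontr)
    assume "i \<notin> D_R m x"
    then have "reduced (x @ [i])" using reduced_snoc_if_not_mem_D_R x i by blast
    moreover have xi: "x @ [i] \<in> words m" using x(1) i(1) unfolding words_def by auto
    ultimately have "ldiv m (x @ [i]) (Delta m)"
      using left_divides_Delta_if_reduced ldiv_iff_left_divides[OF Delta_in_words]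
      unfolding words_def by blast
    moreover have "ldiv m (x @ [i]) (x @ y)"
      using ldiv_iff_left_divides[OF words_append[OF x(1) y]] i(2) by simp
    ultimately have "x @ [i] \<preceq> x"
      using N xi ldiv_iff_left_divides[OF x(1)] unfolding normal_def by blast
    then show False using left_divides_length by fastforce
  qed
qed

text \<open>For the converse, a simple \<open>w\<close> dividing \<open>xy\<close> is compared with the lcm \<open>L = xt\<close> of \<open>w\<close> and
  \<open>x\<close>: \<open>L\<close> is simple, and if \<open>t\<close> were nonempty its first letter would lie in
  \<open>D\<^sub>L(y) \<subseteq> D\<^sub>R(x)\<close>, producing a square \<open>\<sigma>\<^sub>c\<sigma>\<^sub>c\<close> inside the reduced word \<open>L\<close>.\<close>

lemma normal_if_D_L_subset_D_R:
  assumes x: "x \<in> words m" "reduced x" and y: "y \<in> words m" and D: "D_L m y \<subseteq> D_R m x"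
  shows "normal m x y"
  unfolding normal_def
proof (intro conjI ballI impI)
  have xy: "x @ y \<in> words m" using words_append x y by blast
  have xD: "x \<preceq> Delta m" using left_divides_Delta_if_reduced x unfolding words_def by blast
  then show "ldiv m x (Delta m)" using ldiv_iff_left_divides[OF Delta_in_words] by simp
  show "ldiv m x (x @ y)" using ldiv_iff_left_divides[OF xy] by simp
  fix w assume "w \<in> words m" "ldiv m w (Delta m)" "ldiv m w (x @ y)"
  then have wD: "w \<preceq> Delta m" and wxy: "w \<preceq> x @ y"
    using ldiv_iff_left_divides[OF Delta_in_words] ldiv_iff_left_divides[OF xy] by auto
  obtain L where L: "is_lcm w x L" using is_lcm_exists[OF wxy left_divides_append] by blast
  have red_L: "reduced L"
    using L wD xD reduced_if_left_divides_Delta unfolding is_lcm_def by blast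
  obtain t where t: "(x @ t) \<approx> L" using L unfolding is_lcm_def left_divides_def by blast
  have "L \<preceq> x @ y" using L wxy left_divides_append unfolding is_lcm_def by blast
  then obtain s where s: "(L @ s) \<approx> (x @ y)" unfolding left_divides_def by blast
  have "(x @ t @ s) \<approx> (x @ y)" using braid_eq_trans[OF braid_eq_append_right[OF t] s] by simp
  then have ts: "(t @ s) \<approx> y" by (rule braid_eq_append_cancel)
  show "ldiv m w x"
  proof (cases t)
    case Nil
    then have "w \<preceq> x" using L braid_eq_sym[OF t] left_divides_braid_eq_trans
      unfolding is_lcm_def by auto
    then show ?thesis using ldiv_iff_left_divides[OF x(1)] by simp
  next
    case (Cons c t')
    have "c \<in> set y" using braid_eq_set[OF ts] Cons by auto
    then have "c \<in> D_L m y"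
      using mem_D_L_iff[OF y] y ts Cons unfolding words_def left_divides_def by force
    then obtain z where z: "(z @ [c]) \<approx> x" using D mem_D_R_iff[OF x(1)] by blast
    have "(z @ [c, c] @ t') \<approx> L"
      using braid_eq_trans[OF braid_eq_append_right[OF z, of t] t] Cons by simp
    then show ?thesis using braid_eq_reduced red_L not_reduced_square by blast
  qed
qed

theorem normal_iff_D_L_subset_D_R:
  assumes "x \<in> words m" "reduced x" "y \<in> words m"
  shows "normal m x y \<longleftrightarrow> D_L m y \<subseteq> D_R m x"
  using D_L_subset_D_R_if_normal normal_if_D_L_subset_D_R assms by blast

section \<open>The enumeration of simple braids\<close>

lemma nth_concat_equal_length:
  assumes "\<forall>x. length (f x) = L" "k < L * length xs"
  shows "concat (map f xs) ! k = f (xs ! (k div L)) ! (k mod L)"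
  using assms(2)
proof (induction xs arbitrary: k)
  case (Cons x xs)
  have L: "L > 0" using Cons.prems by (cases "L = 0") auto
  show ?case
  proof (cases "k < L")
    case True then show ?thesis using assms(1) by (simp add: nth_append)
  next
    case False
    then have "k - L < L * length xs" using Cons.prems by (simp add: algebra_simps)
    moreover have "k div L = Suc ((k - L) div L)" using False L by (simp add: le_div_geq)
    moreover have "k mod L = (k - L) mod L" using False by (simp add: le_mod_geq)
    ultimately show ?thesis using Cons.IH False assms(1) by (simp add: nth_append)
  qed
qed simp

lemma length_concat_equal_length: "\<forall>x. length (f x) = L \<Longrightarrow> length (concat (map f xs)) = L * length xs"
  by (induction xs) auto

lemma length_simples [simp]: "length (simples n) = fact n"
proof (induction n)
  case (Suc m)
  have "length (simples (Suc m)) = fact m * length (rev [1..<Suc (Suc m)])"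
    by (subst simples.simps, rule length_concat_equal_length) (simp add: Suc)
  then show ?case by simp
qed simp

context
  notes upt_Suc [simp del]
begin

text \<open>Counting from 0, the \<open>k\<close>-th entry of \<open>S\<^sub>m\<^sub>+\<^sub>1\<close> lies in block \<open>k div m!\<close>: it is \<open>\<sigma>\<^sub>i\<^sub>,\<^sub>m\<^sub>+\<^sub>1\<close>
  times the \<open>(k mod m!)\<close>-th entry of \<open>S\<^sub>m\<close>, where \<open>i = m + 1 - k div m!\<close>.\<close>

lemma nth_simples_Suc:
  assumes "k < fact (Suc m)"
  shows "simples (Suc m) ! k = [Suc m - k div fact m..<Suc m] @ simples m ! (k mod fact m)"
proof -
  have k: "k < fact m * length (rev [1..<Suc (Suc m)])"
    using assms by (simp add: algebra_simps)
  have "k < Suc m * fact m" using assms by simp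
  then have "k div fact m < Suc m" by (simp add: div_less_iff_less_mult)
  then have "rev [1..<Suc (Suc m)] ! (k div fact m) = Suc m - k div fact m"
    by (simp add: rev_nth)
  moreover have "k mod fact m < length (simples m)" by simp
  ultimately show ?thesis
    by (subst simples.simps, subst nth_concat_equal_length[OF _ k]) (simp_all add: sigma_seg_def)
qed

lemma nth_simples_Suc_low: "l < fact m \<Longrightarrow> simples (Suc m) ! l = simples m ! l"
proof -
  assume l: "l < fact m"
  moreover have "fact m \<le> (fact (Suc m) :: nat)" by (simp add: fact_mono)
  ultimately show ?thesis using nth_simples_Suc[of l m] by simp
qed

lemma nth_simples_0: "simples n ! 0 = []"
proof (induction n)
  case (Suc m)
  then show ?case using nth_simples_Suc_low[of 0 m] by (simp del: simples.simps)
qed simp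

lemma nth_simples_last: "simples n ! (fact n - 1) = Delta n"
proof (induction n)
  case (Suc m)
  have fm: "fact m > (0::nat)" by simp
  have e: "(fact (Suc m) - 1 :: nat) = (fact m - 1) + m * fact m"
    using fm by (simp add: algebra_simps)
  have "(fact (Suc m) - 1 :: nat) div fact m = m" "(fact (Suc m) - 1 :: nat) mod fact m = fact m - 1"
    unfolding e using fm by (simp_all only: div_mult_self1 mod_mult_self1) simp_all
  then show ?case using nth_simples_Suc[of "fact (Suc m) - 1" m] Suc.IH by (simp del: simples.simps)
qed simp

lemma nth_simples_nonempty: "k < fact n \<Longrightarrow> k \<noteq> 0 \<Longrightarrow> simples n ! k \<noteq> []"
proof (induction n arbitrary: k)
  case (Suc m)
  show ?case
  proof (cases "k div fact m = 0")
    case True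
    then have "k < fact m" by (simp add: div_eq_0_iff)
    then show ?thesis using Suc nth_simples_Suc_low by (simp del: simples.simps)
  next
    case False
    then have "Suc m - k div fact m < Suc m" by simp
    then show ?thesis using nth_simples_Suc[OF Suc.prems(1)] by (simp del: simples.simps)
  qed
qed simp

text \<open>All entries but the last are shorter than \<open>\<Delta>\<^sub>n\<close>; the two statements are proved together.\<close>

lemma length_nth_simples:
  "k < fact n \<Longrightarrow> length (simples n ! k) + (if k = fact n - 1 then 0 else 1) \<le> length (Delta n)"
proof (induction n arbitrary: k)
  case (Suc m)
  let ?d = "k div fact m" and ?r = "k mod fact m"
  have "k < Suc m * fact m" using Suc.prems by simp
  then have "?d < Suc m" by (simp add: div_less_iff_less_mult)
  then have d: "?d \<le> m" by simp
  have fm: "fact m > (0::nat)" by simp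
  have "k = fact (Suc m) - 1 \<longleftrightarrow> ?d = m \<and> ?r = fact m - 1"
  proof
    assume "k = fact (Suc m) - 1"
    then have "k = (fact m - 1) + m * fact m" using fm by (simp add: algebra_simps)
    then show "?d = m \<and> ?r = fact m - 1"
      using fm by (simp_all only: div_mult_self1 mod_mult_self1) simp
  next
    assume "?d = m \<and> ?r = fact m - 1"
    moreover have "k = ?d * fact m + ?r" by simp
    ultimately show "k = fact (Suc m) - 1" using fm by (simp add: algebra_simps)
  qed
  moreover have "length (simples (Suc m) ! k) = ?d + length (simples m ! ?r)"
    using nth_simples_Suc[OF Suc.prems] d by (simp del: simples.simps)
  ultimately show ?case using Suc.IH[of ?r] d by (auto split: if_splits simp del: simples.simps)
qed simp

lemma reduced_upt_append:
  assumes "set y \<subseteq> {1..<m}" "reduced y" "i \<le> Suc m"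
  shows "reduced ([i..<Suc m] @ y)"
  unfolding reduced_def
proof (intro allI)
  fix p q
  have untouched: "crossings y (Suc m) r = 0" for r
    using assms(1) by (intro crossings_untouched) auto
  then have untouched': "crossings y r (Suc m) = 0" for r
    by (simp add: crossings_sym)
  have i: "strand_pos [i..<Suc m] i = Suc m" using strand_pos_upt[OF assms(3), of i] by simp
  have "crossings y (strand_pos [i..<Suc m] p) (strand_pos [i..<Suc m] q) \<le> 1"
    using reduced_crossings_le[OF assms(2)] .
  then show "crossings ([i..<Suc m] @ y) p q \<le> 1"
    unfolding crossings_append crossings_upt[OF assms(3)]
    using i untouched untouched' by auto
qed

lemma simples_in_words_reduced: "x \<in> set (simples n) \<Longrightarrow> x \<in> words n \<and> reduced x"
proof (induction n arbitrary: x)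
  case 0 then show ?case by (simp add: reduced_def words_def)
next
  case (Suc m)
  then have "\<exists>i \<in> {1..Suc m}. \<exists>y \<in> set (simples m). x = [i..<Suc m] @ y"
    by (auto simp: sigma_seg_def)
  then obtain i y where iy: "i \<in> {1..Suc m}" "y \<in> set (simples m)" "x = [i..<Suc m] @ y"
    by blast
  then have y: "set y \<subseteq> {1..<m}" "reduced y" using Suc.IH unfolding words_def by auto
  then show ?case using reduced_upt_append[OF y] iy unfolding words_def by auto
qed

lemma tau_in_words: "k \<in> {1..fact n} \<Longrightarrow> tau n k \<in> words n"
  and reduced_tau: "k \<in> {1..fact n} \<Longrightarrow> reduced (tau n k)"
  using simples_in_words_reduced[of "tau n k" n] unfolding tau_def
  by (auto intro!: nth_mem)

lemma tau_1: "tau n 1 = []"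
  unfolding tau_def by (simp add: nth_simples_0)

lemma tau_fact: "tau n (fact n) = Delta n"
  unfolding tau_def by (rule nth_simples_last)

lemma M_eq_D_L_subset_D_R:
  "k \<in> {1..fact n} \<Longrightarrow> l \<in> {1..fact n} \<Longrightarrow>
   M n k l = (if D_L n (tau n l) \<subseteq> D_R n (tau n k) then 1 else 0)"
  unfolding M_def using normal_iff_D_L_subset_D_R tau_in_words reduced_tau by simp

lemma D_L_Nil: "D_L n [] = {}"
  unfolding D_L_def using ldiv_iff_left_divides[of "[]" n] left_divides_length
  by (fastforce simp: words_def)

lemma D_R_Nil: "D_R n [] = {}"
  unfolding D_R_def using rdiv_iff[of "[]" n] braid_eq_length
  by (fastforce simp: words_def)

lemma hd_mem_D_L: "c # y \<in> words n \<Longrightarrow> c \<in> D_L n (c # y)"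
  using mem_D_L_iff[of "c # y" n c] left_divides_append[of "[c]" y] unfolding words_def by auto

text \<open>A proper prefix \<open>x\<close> of \<open>\<Delta>\<^sub>n\<close> is continued by some letter \<open>c\<close>; since \<open>x c\<close> is still
  reduced, \<open>c \<notin> D\<^sub>R(x)\<close>, while \<open>c \<in> D\<^sub>L(\<Delta>\<^sub>n)\<close>.\<close>

lemma D_L_Delta_not_subset_D_R:
  assumes x: "x \<in> words n" "reduced x" and short: "length x < length (Delta n)"
  shows "\<not> D_L n (Delta n) \<subseteq> D_R n x"
proof -
  obtain z where z: "(x @ z) \<approx> Delta n"
    using left_divides_Delta_if_reduced x unfolding words_def left_divides_def by blast
  then obtain c z' where cz: "z = c # z'" using short braid_eq_length[OF z] by (cases z) auto
  have c: "c \<in> {1..<n}" using braid_eq_set[OF z] cz set_Delta[of n] by auto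
  have "[c] \<preceq> Delta n" using left_divides_Delta_if_reduced[of "[c]" n] c
    by (simp add: reduced_def gen_perm_def exchanges_def)
  then have "c \<in> D_L n (Delta n)" using mem_D_L_iff[OF Delta_in_words] c by simp
  moreover have "c \<notin> D_R n x"
  proof
    assume "c \<in> D_R n x"
    then obtain y where "(y @ [c]) \<approx> x" using mem_D_R_iff[OF x(1)] by blast
    then have "(y @ [c, c] @ z') \<approx> Delta n"
      using braid_eq_trans[OF braid_eq_append_right[OF \<open>(y @ [c]) \<approx> x\<close>, of z] z] cz by simp
    then show False using braid_eq_reduced reduced_Delta not_reduced_square by blast
  qed
  ultimately show ?thesis by blast
qed

lemma D_L_Suc: "y \<in> words m \<Longrightarrow> D_L (Suc m) y = D_L m y"
proof -
  assume y: "y \<in> words m"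
  then have "y \<in> words (Suc m)" unfolding words_def by auto
  moreover have "i < m" if "[i] \<preceq> y" for i
    using that y braid_eq_set unfolding left_divides_def words_def by fastforce
  ultimately show ?thesis
    using mem_D_L_iff[OF y] mem_D_L_iff[of y "Suc m"] by auto
qed

text \<open>The prefix \<open>\<sigma>\<^sub>i\<^sub>,\<^sub>m\<^sub>+\<^sub>1\<close> contributes nothing to \<open>D\<^sub>R\<close> below \<open>m\<close>: a letter \<open>j < m\<close> at the end
  of \<open>\<sigma>\<^sub>i\<^sub>,\<^sub>m\<^sub>+\<^sub>1 x\<close> means the strands ending at \<open>j\<close>, \<open>j + 1\<close> cross, and they cannot involve the
  strand sent to position \<open>m + 1\<close> by \<open>\<sigma>\<^sub>i\<^sub>,\<^sub>m\<^sub>+\<^sub>1\<close>, so they cross in \<open>x\<close>.\<close>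

lemma mem_D_R_upt_append_iff:
  assumes x: "x \<in> words m" "reduced x" and i: "1 \<le> i" "i \<le> Suc m" and j: "j \<in> {1..<m}"
  shows "j \<in> D_R (Suc m) ([i..<Suc m] @ x) \<longleftrightarrow> j \<in> D_R m x"
proof
  let ?s = "[i..<Suc m]"
  have w: "?s @ x \<in> words (Suc m)" using x i unfolding words_def by auto
  assume "j \<in> D_R (Suc m) (?s @ x)"
  then obtain z where z: "(z @ [j]) \<approx> ?s @ x" using mem_D_R_iff[OF w] by blast
  define P Q where "P = strand_pos (rev (?s @ x)) j" and "Q = strand_pos (rev (?s @ x)) (Suc j)"
  have PQ: "strand_pos (?s @ x) P = j" "strand_pos (?s @ x) Q = Suc j"
    unfolding P_def Q_def by (simp_all only: strand_pos_strand_pos_rev)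
  then have "strand_pos (z @ [j]) P = j" "strand_pos (z @ [j]) Q = Suc j"
    using braid_eq_strand_pos[OF z] by simp_all
  then have "strand_pos z P = Suc j" "strand_pos z Q = j"
    by (auto simp: gen_perm_def split: if_splits)
  then have "crossings (z @ [j]) P Q \<ge> 1" by (simp add: crossings_append exchanges_def)
  then have cross: "crossings (?s @ x) P Q \<ge> 1" using braid_eq_crossings[OF z] by simp
  have "strand_pos x (Suc m) = Suc m" using x(1) unfolding words_def by (intro strand_pos_untouched) auto
  then have "strand_pos (?s @ x) i = Suc m" using strand_pos_upt[OF i(2), of i] by simp
  then have "P \<noteq> i" "Q \<noteq> i" using PQ j by auto
  then have "crossings ?s P Q = 0" using crossings_upt[OF i(2), of P Q] by auto
  then have "crossings x (strand_pos ?s P) (strand_pos ?s Q) = 1"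
    using cross reduced_crossings_le[OF x(2), of "strand_pos ?s P" "strand_pos ?s Q"]
    by (simp add: crossings_append)
  moreover have "strand_pos x (strand_pos ?s P) = j" "strand_pos x (strand_pos ?s Q) = Suc j"
    using PQ by simp_all
  ultimately obtain z' where "x \<approx> z' @ [j]"
    using reduced_crossing_right_divisor[OF x(2)] by blast
  then show "j \<in> D_R m x" using mem_D_R_iff[OF x(1)] j braid_eq_sym by blast
next
  let ?s = "[i..<Suc m]"
  have w: "?s @ x \<in> words (Suc m)" using x i unfolding words_def by auto
  assume "j \<in> D_R m x"
  then obtain z where "(z @ [j]) \<approx> x" using mem_D_R_iff[OF x(1)] by blast
  then have "((?s @ z) @ [j]) \<approx> ?s @ x" using braid_eq_append_left[of _ x ?s] by simp
  then have "\<exists>z'. (z' @ [j]) \<approx> ?s @ x" by blast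
  then show "j \<in> D_R (Suc m) (?s @ x)" using mem_D_R_iff[OF w] j by simp
qed

lemma normal_upt_append_iff:
  assumes x: "x \<in> words m" "reduced x" and i: "1 \<le> i" "i \<le> Suc m" and y: "y \<in> words m"
  shows "normal (Suc m) ([i..<Suc m] @ x) y \<longleftrightarrow> normal m x y"
proof -
  have w: "[i..<Suc m] @ x \<in> words (Suc m)" "reduced ([i..<Suc m] @ x)"
    using x i reduced_upt_append[of x m i] unfolding words_def by auto
  have y': "y \<in> words (Suc m)" using y unfolding words_def by auto
  have "D_L m y \<subseteq> {1..<m}" unfolding D_L_def by auto
  then have "D_L (Suc m) y \<subseteq> D_R (Suc m) ([i..<Suc m] @ x) \<longleftrightarrow> D_L m y \<subseteq> D_R m x"
    unfolding D_L_Suc[OF y] using mem_D_R_upt_append_iff[OF x i] by blast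
  then show ?thesis
    using normal_iff_D_L_subset_D_R[OF w y'] normal_iff_D_L_subset_D_R[OF x y] by simp
qed

end

section \<open>The matrix\<close>

lemma one_mem_fact_range: "(1::nat) \<in> {1..fact n}"
  by (simp add: fact_ge_1)

lemma fact_mem_fact_range: "(fact n :: nat) \<in> {1..fact n}"
  by (simp add: fact_ge_1)

lemma M_first_column: "k \<in> {1..fact n} \<Longrightarrow> M n k 1 = 1"
  unfolding M_eq_D_L_subset_D_R[OF _ one_mem_fact_range] tau_1 D_L_Nil by simp

lemma M_last_row: "l \<in> {1..fact n} \<Longrightarrow> M n (fact n) l = 1"
proof -
  assume l: "l \<in> {1..fact n}"
  have "normal n (Delta n) (tau n l)"
    using ldiv_iff_left_divides[OF Delta_in_words]
      ldiv_iff_left_divides[OF words_append[OF Delta_in_words tau_in_words[OF l]]]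
    unfolding normal_def by simp
  then show ?thesis unfolding M_def tau_fact by simp
qed

lemma M_first_row: "l \<in> {2..fact n} \<Longrightarrow> M n 1 l = 0"
proof -
  assume l: "l \<in> {2..fact n}"
  then have l': "l \<in> {1..fact n}" by simp
  have "l - 1 < fact n" "l - 1 \<noteq> 0" using l by auto
  then have "tau n l \<noteq> []" unfolding tau_def by (rule nth_simples_nonempty)
  then obtain c y where cy: "tau n l = c # y" by (cases "tau n l") auto
  then have "c \<in> D_L n (tau n l)" using hd_mem_D_L tau_in_words[OF l'] by simp
  then show ?thesis unfolding M_eq_D_L_subset_D_R[OF one_mem_fact_range l'] tau_1 D_R_Nil by auto
qed

lemma M_last_column: "k \<in> {1..<fact n} \<Longrightarrow> M n k (fact n) = 0"
proof -
  assume k: "k \<in> {1..<fact n}"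
  then have k': "k \<in> {1..fact n}" by simp
  have "k - 1 < fact n" "k - 1 \<noteq> fact n - 1" using k by auto
  then have "length (tau n k) < length (Delta n)"
    using length_nth_simples[of "k - 1" n] unfolding tau_def by simp
  then have "\<not> D_L n (Delta n) \<subseteq> D_R n (tau n k)"
    using D_L_Delta_not_subset_D_R tau_in_words[OF k'] reduced_tau[OF k'] by blast
  then show ?thesis unfolding M_eq_D_L_subset_D_R[OF k' fact_mem_fact_range] tau_fact by simp
qed

text \<open>Row \<open>k\<close> of \<open>M\<^sub>m\<^sub>+\<^sub>1\<close> belongs to \<open>\<tau>\<^sub>k = \<sigma>\<^sub>i\<^sub>,\<^sub>m\<^sub>+\<^sub>1 x\<close> with \<open>x\<close> the entry of \<open>S\<^sub>m\<close> at index
  \<open>(k - 1) mod m! + 1\<close>, and the first \<open>m!\<close> columns belong to the entries of \<open>S\<^sub>m\<close>.\<close>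

lemma M_Suc_stacked:
  assumes k: "k \<in> {1..fact (Suc m)}" and l: "l \<in> {1..fact m}"
  shows "M (Suc m) k l = M m ((k - 1) mod fact m + 1) l"
proof -
  define r i where "r = (k - 1) mod fact m" and "i = Suc m - (k - 1) div fact m"
  have "k - 1 < fact (Suc m)" using k by auto
  then have tk: "tau (Suc m) k = [i..<Suc m] @ tau m (r + 1)"
    unfolding tau_def r_def i_def using nth_simples_Suc by simp
  have "(k - 1) div fact m < Suc m"
    using \<open>k - 1 < fact (Suc m)\<close> by (simp add: div_less_iff_less_mult)
  then have i: "1 \<le> i" "i \<le> Suc m" unfolding i_def by auto
  have r: "r + 1 \<in> {1..fact m}" unfolding r_def by (simp add: Suc_leI)
  have tl: "tau (Suc m) l = tau m l"
    unfolding tau_def using nth_simples_Suc_low[of "l - 1" m] l by auto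
  have "normal (Suc m) ([i..<Suc m] @ tau m (r + 1)) (tau m l) \<longleftrightarrow> normal m (tau m (r + 1)) (tau m l)"
    using normal_upt_append_iff[OF tau_in_words[OF r] reduced_tau[OF r] i tau_in_words[OF l]] .
  then show ?thesis unfolding M_def tk tl r_def by simp
qed

lemma M_rows_eq:
  "k \<in> {1..fact n} \<Longrightarrow> k' \<in> {1..fact n} \<Longrightarrow> l \<in> {1..fact n} \<Longrightarrow>
   D_R n (tau n k) = D_R n (tau n k') \<Longrightarrow> M n k l = M n k' l"
  using M_eq_D_L_subset_D_R by simp

lemma M_columns_eq:
  "l \<in> {1..fact n} \<Longrightarrow> l' \<in> {1..fact n} \<Longrightarrow> k \<in> {1..fact n} \<Longrightarrow>
   D_L n (tau n l) = D_L n (tau n l') \<Longrightarrow> M n k l = M n k l'"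
  using M_eq_D_L_subset_D_R by simp

theorem lemma2p5:
  fixes n :: nat
  assumes "n \<ge> 2"
  shows
    "(\<forall>k \<in> {1..fact n}. M n k 1 = 1) \<and>
     (\<forall>l \<in> {1..fact n}. M n (fact n) l = 1) \<and>
     (\<forall>l \<in> {2..fact n}. M n 1 l = 0) \<and>
     (\<forall>k \<in> {1..<fact n}. M n k (fact n) = 0) \<and>
     (\<forall>k \<in> {1..fact n}. \<forall>l \<in> {1..fact (n - 1)}.
        M n k l = M (n - 1) ((k - 1) mod fact (n - 1) + 1) l) \<and>
     (\<forall>k \<in> {1..fact n}. \<forall>k' \<in> {1..fact n}.
        D_R n (tau n k) = D_R n (tau n k') \<longrightarrow> (\<forall>l \<in> {1..fact n}. M n k l = M n k' l)) \<and>
     (\<forall>l \<in> {1..fact n}. \<forall>l' \<in> {1..fact n}.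
        D_L n (tau n l) = D_L n (tau n l') \<longrightarrow> (\<forall>k \<in> {1..fact n}. M n k l = M n k l'))"
proof (intro conjI ballI impI)
  fix k l :: nat
  show "M n k 1 = 1" if "k \<in> {1..fact n}" using that by (rule M_first_column)
  show "M n (fact n) l = 1" if "l \<in> {1..fact n}" using that by (rule M_last_row)
  show "M n 1 l = 0" if "l \<in> {2..fact n}" using that by (rule M_first_row)
  show "M n k (fact n) = 0" if "k \<in> {1..<fact n}" using that by (rule M_last_column)
  show "M n k l = M (n - 1) ((k - 1) mod fact (n - 1) + 1) l"
    if "k \<in> {1..fact n}" and "l \<in> {1..fact (n - 1)}"
  proof -
    obtain m where n: "n = Suc m" using assms by (cases n) auto
    show ?thesis using that unfolding n diff_Suc_1 by (rule M_Suc_stacked)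
  qed
next
  fix k k' l :: nat
  assume "k \<in> {1..fact n}" "k' \<in> {1..fact n}" "D_R n (tau n k) = D_R n (tau n k')" "l \<in> {1..fact n}"
  then show "M n k l = M n k' l" by (intro M_rows_eq)
next
  fix l l' k :: nat
  assume "l \<in> {1..fact n}" "l' \<in> {1..fact n}" "D_L n (tau n l) = D_L n (tau n l')" "k \<in> {1..fact n}"
  then show "M n k l = M n k l'" by (intro M_columns_eq)
qed

end
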